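(* Consider the $T$-round online first-price auction problem and the combined policy described in the context. For a sequence $(v_t,m_t)_{t=1}^T$, let $V_T\coloneqq\sum_{t=2}^T|m_t-m_{t-1}|$ and $L_T\coloneqq\sum_{t=2}^T\mathbbm{1}(m_t\ne m_{t-1})$, and assume $V_T=\Omega(\ln T)$. Then the combined policy achieves expected dynamic regret $\tilde{O}(\min\{\sqrt{TV_T},L_T\})$.
   Context: Online first-price auction over $T$ rounds: at each round $t$ the learner observes a private value $v_t\in[0,1]$, submits a bid $b_t\in[0,1]$ (possibly randomized, depending only on past $(v_s,m_s)_{s<t}$ and $v_t$), then observes $m_t\in[0,1]$, the highest bid of the other bidders, and receives reward $r(b_t;v_t,m_t)$ with $r(b;v,m)\coloneqq(v-b)\mathbbm{1}(b\ge m)$. The expected dynamic regret is $\mathbb{E}[\mathrm{DR}_T(\pi)]\coloneqq\sum_{t=1}^T\max\{v_t-m_t,0\}-\sum_{t=1}^T\mathbb{E}[r(b_t;v_t,m_t)]$. $\tilde{O}(\cdot)$ hides polylogarithmic factors in $T$. Base policy $\mathcal{A}$ (AR-Prod): experts $i\in\{1,\dots,N\}$, $N=1/\epsilon$, $\epsilon=1/T$, expert $i$ bids $\min\{v_t,i\epsilon\}$ with reward $r_{t,i}=r(\min\{v_t,i\epsilon\};v_t,m_t)$; time is split into batches, at the start of each batch weights reset to uniform; bid $\min\{v_t,i\epsilon\}$ is chosen w.p. $p_{t,i}$, then $p_{t+1,i}\propto(1+\eta(r_{t,i}-\mu_t))p_{t,i}$ with $\eta=1/2$, $\mu_t=\max\{v_t-m_t,0\}$;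 batch $j$ continues while its current length $\Delta_{T,j}<\sqrt{T/(\sum_{i=1}^jV_{T,i}+1/T)}$, where $V_{T,i}$ is the variation $\sum|m_t-m_{t-1}|$ over consecutive rounds within batch $i$ (so far, for the current batch). Base policy $\mathcal{B}$ (AR-OMD): same experts (with suitably chosen precision $\epsilon$ and learning rate $\eta$); a new batch begins at round $t+1$ whenever at a non-first round $t$ of the batch $m_t\ne m_{t-1}$; in round $t$ of a batch starting at $t_0$, bid $\min\{v_t,i\epsilon\}$ w.p. $p_{t,i}\propto\exp(\eta(\sum_{s=t_0}^{t-1}r_{s,i}+r(\min\{v_t,i\epsilon\};v_t,m_{t-1})))$. Combined policy: with $\eta'=\frac12\sqrt{\ln T/T}$, $w_1^{\mathcal{A}}=\eta'$, $w^{\mathcal{B}}=1-\eta'$ (fixed); at each round both base policies produce bids $b_t^{\mathcal{A}},b_t^{\mathcal{B}}$; the learner bids $b_t^{\mathcal{A}}$ with probability $p_t=w_t^{\mathcal{A}}/(w_t^{\mathcal{A}}+w^{\mathcal{B}})$ and $b_t^{\mathcal{B}}$ otherwise; after observing $m_t$ (which is passed to both base policies), set $\delta_t=r(b_t^{\mathcal{A}};v_t,m_t)-r(b_t^{\mathcal{B}};v_t,m_t)$ and $w_{t+1}^{\mathcal{A}}=w_t^{\mathcal{A}}(1+\eta'\delta_t)$. *)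

theory Defs
  imports "HOL-Probability.Probability"
begin

definition r :: "real \<Rightarrow> real \<Rightarrow> real \<Rightarrow> real" where
  "r b v m = (if b \<ge> m then v - b else 0)"

definition wpmf :: "nat \<Rightarrow> (nat \<Rightarrow> real) \<Rightarrow> nat pmf" where
  "wpmf N w = embed_pmf (\<lambda>i. if i \<in> {1..N} then w i / (\<Sum>j=1..N. w j) else 0)"

text \<open>AR-Prod (epsilon = 1/T, N = T experts, eta = 1/2).
  prodState T v m t is the state at the start of round t+1:
  (start of current batch, total variation of completed batches, unnormalised weights).\<close>
fun prodState :: "nat \<Rightarrow> (nat \<Rightarrow> real) \<Rightarrow> (nat \<Rightarrow> real) \<Rightarrow> nat \<Rightarrow> nat \<times> real \<times> (nat \<Rightarrow> real)" where
  "prodState T v m 0 = (1, 0, (\<lambda>i. 1))"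
| "prodState T v m (Suc t) = (case prodState T v m t of (s, Vp, w) \<Rightarrow>
     let u = Suc t;
         mu = max (v u - m u) 0;
         w' = (\<lambda>i. w i * (1 + (1/2) * (r (min (v u) (real i / real T)) (v u) (m u) - mu)));
         Vc = (\<Sum>k\<in>{s<..u}. \<bar>m k - m (k - 1)\<bar>);
         len = u - s + 1
     in if real len < sqrt (real T / (Vp + Vc + 1 / real T))
        then (s, Vp, w')
        else (Suc u, Vp + Vc, (\<lambda>i. 1)))"

definition bidA :: "nat \<Rightarrow> (nat \<Rightarrow> real) \<Rightarrow> (nat \<Rightarrow> real) \<Rightarrow> nat \<Rightarrow> real pmf" where
  "bidA T v m t = map_pmf (\<lambda>i. min (v t) (real i / real T))
                    (wpmf T (snd (snd (prodState T v m (t - 1)))))"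

text \<open>AR-OMD batch structure: start of the batch containing round t (t \<ge> 1).\<close>
fun omdStart :: "(nat \<Rightarrow> real) \<Rightarrow> nat \<Rightarrow> nat" where
  "omdStart m 0 = 1"
| "omdStart m (Suc t) = (if t = 0 then 1 else
     (let t0 = omdStart m t in if t \<noteq> t0 \<and> m t \<noteq> m (t - 1) then Suc t else t0))"

text \<open>Bid distribution of AR-OMD at round t with NB experts (epsilon = 1/NB) and rate eta.\<close>
definition bidB :: "nat \<Rightarrow> real \<Rightarrow> (nat \<Rightarrow> real) \<Rightarrow> (nat \<Rightarrow> real) \<Rightarrow> nat \<Rightarrow> real pmf" where
  "bidB NB eta v m t = map_pmf (\<lambda>i. min (v t) (real i / real NB))
     (wpmf NB (\<lambda>i. exp (eta * ((\<Sum>s\<in>{omdStart m t..<t}. r (min (v s) (real i / real NB)) (v s) (m s))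
                              + r (min (v t) (real i / real NB)) (v t) (m (t - 1))))))"

definition etaC :: "nat \<Rightarrow> real" where
  "etaC T = (1/2) * sqrt (ln (real T) / real T)"

text \<open>Distribution of the (random) weight w^A at the start of round t+1.\<close>
fun wDist :: "nat \<Rightarrow> nat \<Rightarrow> real \<Rightarrow> (nat \<Rightarrow> real) \<Rightarrow> (nat \<Rightarrow> real) \<Rightarrow> nat \<Rightarrow> real pmf" where
  "wDist T NB eta v m 0 = return_pmf (etaC T)"
| "wDist T NB eta v m (Suc t) =
     bind_pmf (wDist T NB eta v m t) (\<lambda>w.
     bind_pmf (bidA T v m (Suc t)) (\<lambda>bA.
     map_pmf (\<lambda>bB. w * (1 + etaC T * (r bA (v (Suc t)) (m (Suc t)) - r bB (v (Suc t)) (m (Suc t)))))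
       (bidB NB eta v m (Suc t))))"

definition learnerBid :: "nat \<Rightarrow> nat \<Rightarrow> real \<Rightarrow> (nat \<Rightarrow> real) \<Rightarrow> (nat \<Rightarrow> real) \<Rightarrow> nat \<Rightarrow> real pmf" where
  "learnerBid T NB eta v m t =
     bind_pmf (wDist T NB eta v m (t - 1)) (\<lambda>w.
     bind_pmf (bidA T v m t) (\<lambda>bA.
     bind_pmf (bidB NB eta v m t) (\<lambda>bB.
     map_pmf (\<lambda>c. if c then bA else bB) (bernoulli_pmf (w / (w + (1 - etaC T)))))))"

definition expDR :: "nat \<Rightarrow> nat \<Rightarrow> real \<Rightarrow> (nat \<Rightarrow> real) \<Rightarrow> (nat \<Rightarrow> real) \<Rightarrow> real" where
  "expDR T NB eta v m =
     (\<Sum>t=1..T. max (v t - m t) 0)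
     - (\<Sum>t=1..T. measure_pmf.expectation (learnerBid T NB eta v m t) (\<lambda>b. r b (v t) (m t)))"

definition VT :: "(nat \<Rightarrow> real) \<Rightarrow> nat \<Rightarrow> real" where
  "VT m T = (\<Sum>t=2..T. \<bar>m t - m (t - 1)\<bar>)"

definition LT :: "(nat \<Rightarrow> real) \<Rightarrow> nat \<Rightarrow> real" where
  "LT m T = real (card {t\<in>{2..T}. m t \<noteq> m (t - 1)})"

end

theory Submission
  imports Defs
begin

text \<open>
  AR-Prod restarts Prod with uniform weights whenever the current batch outlives
  \<open>\<surd>(T / (V + 1/T))\<close>, where \<open>V\<close> is the variation of \<open>m\<close> seen so far.  Within a batch,
  \<open>m\<close> stays within the batch variation \<open>V\<^sub>b\<close> of its initial value, so a single grid bid loses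
  at most \<open>2 V\<^sub>b + 1/T\<close> per round against the dynamic benchmark.  The Prod bound turns this
  into regret \<open>2 ln T + 2 + l (4 V\<^sub>b + 2/T)\<close> for a batch of length \<open>l\<close>, and the length
  threshold makes \<open>l V\<^sub>b\<close> an increment of \<open>\<surd>T \<surd>(V + 1/T)\<close>; summing over batches gives
  \<open>O(ln T \<surd>(T V\<^sub>T))\<close>.

  AR-OMD restarts whenever \<open>m\<close> changes.  In a round with \<open>m t = m (t - 1)\<close> its exponential
  weights are computed against a constant competing bid, for which the least grid bid above it
  is the best expert in every round of the batch; such a round costs at most \<open>1/N + N/\<eta>\<close>, so
  AR-OMD has regret \<open>O(L\<^sub>T)\<close>.

  The learner runs Prod on the two base policies with the weight of AR-OMD frozen at
  \<open>1 - \<eta>'\<close>.  The potentials \<open>E ln (w + 1 - \<eta>')\<close> and \<open>E ln w\<close> of the random weight \<open>w\<close> of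
  AR-Prod show that the learner is within \<open>2\<close> of AR-OMD and within
  \<open>2 \<eta>' T + ln (1/\<eta>') / \<eta>' = O(\<surd>(T ln T))\<close> of AR-Prod.  Once \<open>V\<^sub>T \<ge> 1\<close>, which
  \<open>V\<^sub>T \<ge> c ln T\<close> guarantees for large \<open>T\<close>, all additive terms are absorbed.
\<close>

section \<open>Expectations over finitely supported distributions\<close>

lemma expectation_bind_pmf_finite:
  fixes f :: "'b \<Rightarrow> real"
  assumes "finite (set_pmf M)" "\<And>x. x \<in> set_pmf M \<Longrightarrow> finite (set_pmf (N x))"
  shows "measure_pmf.expectation (bind_pmf M N) f
           = measure_pmf.expectation M (\<lambda>x. measure_pmf.expectation (N x) f)"
  by (simp add: pmf_expectation_bind[OF assms order.refl] integral_measure_pmf[OF assms(1)])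

lemma expectation_mono_finite_pmf:
  fixes f g :: "'a \<Rightarrow> real"
  assumes "finite (set_pmf M)" "\<And>x. x \<in> set_pmf M \<Longrightarrow> f x \<le> g x"
  shows "measure_pmf.expectation M f \<le> measure_pmf.expectation M g"
  using assms by (intro integral_mono_AE) (auto simp: integrable_measure_pmf_finite AE_measure_pmf_iff)

lemma expectation_affine_finite_pmf:
  fixes f :: "'a \<Rightarrow> real"
  assumes "finite (set_pmf M)"
  shows "measure_pmf.expectation M (\<lambda>x. a * f x + b) = a * measure_pmf.expectation M f + b"
  using assms by (simp add: integrable_measure_pmf_finite)

lemma expectation_cong_pmf:
  fixes f g :: "'a \<Rightarrow> real"
  assumes "\<And>x. x \<in> set_pmf M \<Longrightarrow> f x = g x"
  shows "measure_pmf.expectation M f = measure_pmf.expectation M g"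
  using assms by (intro integral_cong_AE) (auto simp: AE_measure_pmf_iff)

lemma expectation_pair_affine:
  fixes f :: "'a \<Rightarrow> real" and g :: "'b \<Rightarrow> real"
  assumes "finite (set_pmf A)" "finite (set_pmf B)"
  shows "measure_pmf.expectation A (\<lambda>a. measure_pmf.expectation B (\<lambda>b. c + p * f a + q * g b))
           = c + p * measure_pmf.expectation A f + q * measure_pmf.expectation B g"
proof -
  have "measure_pmf.expectation B (\<lambda>b. c + p * f a + q * g b) = p * f a + (c + q * measure_pmf.expectation B g)"
    for a
    using expectation_affine_finite_pmf[OF assms(2), of q g "c + p * f a"] by (simp add: algebra_simps)
  then have "measure_pmf.expectation A (\<lambda>a. measure_pmf.expectation B (\<lambda>b. c + p * f a + q * g b))
      = measure_pmf.expectation A (\<lambda>a. p * f a + (c + q * measure_pmf.expectation B g))"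
    by simp
  also have "\<dots> = p * measure_pmf.expectation A f + (c + q * measure_pmf.expectation B g)"
    by (rule expectation_affine_finite_pmf[OF assms(1)])
  finally show ?thesis
    by simp
qed

lemma expectation_pair_mono:
  fixes h h' :: "'a \<Rightarrow> 'b \<Rightarrow> real"
  assumes "finite (set_pmf A)" "finite (set_pmf B)"
    and "\<And>a b. a \<in> set_pmf A \<Longrightarrow> b \<in> set_pmf B \<Longrightarrow> h a b \<le> h' a b"
  shows "measure_pmf.expectation A (\<lambda>a. measure_pmf.expectation B (h a))
           \<le> measure_pmf.expectation A (\<lambda>a. measure_pmf.expectation B (h' a))"
  using assms by (intro expectation_mono_finite_pmf) auto

lemma
  fixes w :: "nat \<Rightarrow> real"
  assumes N: "N \<ge> 1" and pos: "\<forall>i\<in>{1..N}. 0 < w i"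
  shows pmf_wpmf: "pmf (wpmf N w) i = (if i \<in> {1..N} then w i / (\<Sum>j=1..N. w j) else 0)"
    and set_pmf_wpmf: "set_pmf (wpmf N w) \<subseteq> {1..N}"
proof -
  define p where "p i = (if i \<in> {1..N} then w i / (\<Sum>j=1..N. w j) else 0)" for i
  have W: "0 < (\<Sum>j=1..N. w j)"
    using N pos by (intro sum_pos) auto
  have p_nonneg: "0 \<le> p i" for i
    using pos W by (auto simp: p_def less_imp_le)
  have "(\<integral>\<^sup>+i. ennreal (p i) \<partial>count_space UNIV) = (\<Sum>i=1..N. ennreal (p i))"
    by (subst nn_integral_count_space'[of "{1..N}"]) (auto simp: p_def)
  also have "\<dots> = ennreal (\<Sum>i=1..N. p i)"
    using p_nonneg by simp
  also have "(\<Sum>i=1..N. p i) = 1"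
    using W by (simp add: p_def flip: sum_divide_distrib)
  finally have pmf_eq: "pmf (wpmf N w) j = p j" for j
    unfolding wpmf_def p_def[abs_def, symmetric] using p_nonneg by (intro pmf_embed_pmf) auto
  then show "pmf (wpmf N w) i = (if i \<in> {1..N} then w i / (\<Sum>j=1..N. w j) else 0)"
    by (simp add: p_def)
  show "set_pmf (wpmf N w) \<subseteq> {1..N}"
  proof
    fix i
    assume i: "i \<in> set_pmf (wpmf N w)"
    show "i \<in> {1..N}"
    proof (rule ccontr)
      assume "i \<notin> {1..N}"
      then have "pmf (wpmf N w) i = 0"
        using pmf_eq[of i] unfolding p_def by (simp only: if_not_P if_False)
      with i show False
        by (simp add: set_pmf_iff)
    qed
  qed
qed

lemma expectation_wpmf:
  fixes h :: "nat \<Rightarrow> real"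
  assumes N: "N \<ge> 1" and pos: "\<forall>i\<in>{1..N}. 0 < w i"
  shows "measure_pmf.expectation (wpmf N w) h = (\<Sum>i=1..N. w i * h i) / (\<Sum>j=1..N. w j)"
proof -
  have "set_pmf (wpmf N w) \<subseteq> {1..N}"
    by (rule set_pmf_wpmf[OF N pos])
  then have "measure_pmf.expectation (wpmf N w) h = (\<Sum>i=1..N. pmf (wpmf N w) i * h i)"
    by (subst integral_measure_pmf[of "{1..N}"]) auto
  also have "\<dots> = (\<Sum>i=1..N. w i * h i / (\<Sum>j=1..N. w j))"
  proof (intro sum.cong refl)
    fix i
    assume "i \<in> {1..N}"
    then show "pmf (wpmf N w) i * h i = w i * h i / (\<Sum>j=1..N. w j)"
      by (simp only: pmf_wpmf[OF N pos] if_P times_divide_eq_left)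
  qed
  finally show ?thesis
    by (simp add: sum_divide_distrib)
qed

lemma finite_set_pmf_wpmf:
  assumes "N \<ge> 1" "\<forall>i\<in>{1..N}. 0 < w i"
  shows "finite (set_pmf (wpmf N w))"
  using set_pmf_wpmf[OF assms] finite_subset by blast

section \<open>Capped grid bids\<close>

lemma r_min_bid_nonneg: "0 \<le> r (min v b) v m"
  by (simp add: r_def)

lemma r_min_bid_le: "r (min v b) v m \<le> max (v - m) 0"
  by (simp add: r_def)

lemma r_min_bid_le_one:
  assumes "v \<le> 1" "0 \<le> m"
  shows "r (min v b) v m \<le> 1"
  using r_min_bid_le[of v b m] assms by linarith

lemma regret_min_bid_le:
  assumes "m \<le> b"
  shows "max (v - m) 0 - r (min v b) v m \<le> b - m"
  using assms by (auto simp: r_def min_def)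

lemma r_min_bid_le_least_winning:
  assumes "m \<le> b" "m \<le> b' \<Longrightarrow> b \<le> b'"
  shows "r (min v b') v m \<le> r (min v b) v m"
  using assms by (auto simp: r_def min_def)

lemma grid_point_above:
  fixes M :: real
  assumes M: "0 \<le> M" "M \<le> 1" and N: "N \<ge> 1"
  obtains i where "i \<in> {1..N}" "M \<le> real i / real N" "real i / real N \<le> M + 1 / real N"
    "\<And>j. j \<ge> 1 \<Longrightarrow> M \<le> real j / real N \<Longrightarrow> i \<le> j"
proof
  define i where "i = max 1 (nat \<lceil>M * real N\<rceil>)"
  have N_pos: "real N > 0"
    using N by simp
  have "0 \<le> M * real N"
    using M N_pos by simp
  then have ceil_nonneg: "0 \<le> \<lceil>M * real N\<rceil>"
    by simp
  have "M * real N \<le> real N"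
    using M N_pos by (simp add: mult_left_le_one_le)
  then have ceil_le_N: "\<lceil>M * real N\<rceil> \<le> int N"
    by (simp add: ceiling_le_iff)
  show "i \<in> {1..N}"
    using N ceil_le_N unfolding i_def by (simp add: nat_le_iff)
  have "M * real N \<le> real (nat \<lceil>M * real N\<rceil>)"
    using ceil_nonneg by linarith
  also have "\<dots> \<le> real i"
    unfolding i_def by simp
  finally show "M \<le> real i / real N"
    using N_pos by (simp add: pos_le_divide_eq)
  have "real i \<le> M * real N + 1"
  proof (cases "nat \<lceil>M * real N\<rceil> \<le> 1")
    case True
    then show ?thesis
      using M N_pos unfolding i_def by (simp add: max_absorb1)
  next
    case False
    then have "real i = of_int \<lceil>M * real N\<rceil>"
      unfolding i_def using ceil_nonneg by simp
    then show ?thesis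
      by linarith
  qed
  then show "real i / real N \<le> M + 1 / real N"
    using N_pos by (simp add: divide_le_eq add_divide_distrib algebra_simps)
  show "i \<le> j" if "j \<ge> 1" "M \<le> real j / real N" for j
  proof -
    have "M * real N \<le> real j"
      using that(2) N_pos by (simp add: pos_le_divide_eq)
    then have "\<lceil>M * real N\<rceil> \<le> int j"
      by (simp add: ceiling_le_iff)
    then show ?thesis
      using that(1) unfolding i_def by (simp add: nat_le_iff)
  qed
qed

section \<open>Prod restarted at a fixed round\<close>

lemma ln_one_plus_half_ge:
  fixes g :: real
  assumes "-1 \<le> g" "g \<le> 0"
  shows "g \<le> ln (1 + g / 2)"
proof -
  have "\<bar>ln (1 + g / 2) - g / 2\<bar> \<le> 2 * (g / 2)\<^sup>2"
    using assms by (intro abs_ln_one_plus_x_minus_x_bound_nonpos) auto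
  moreover have "g * g \<le> - g"
    using mult_left_mono_neg[of "-1" g g] assms by simp
  then have "2 * (g / 2)\<^sup>2 \<le> - g / 2"
    by (simp add: power2_eq_square)
  ultimately show ?thesis
    by linarith
qed

definition prod_weight :: "(nat \<Rightarrow> nat \<Rightarrow> real) \<Rightarrow> nat \<Rightarrow> nat \<Rightarrow> nat \<Rightarrow> real" where
  "prod_weight g s x j = (\<Prod>y\<in>{s..<x}. 1 + g y j / 2)"

definition prod_loss :: "(nat \<Rightarrow> nat \<Rightarrow> real) \<Rightarrow> nat \<Rightarrow> nat \<Rightarrow> nat \<Rightarrow> real" where
  "prod_loss g N s x =
     - (\<Sum>j=1..N. prod_weight g s x j * g x j) / (\<Sum>j=1..N. prod_weight g s x j)"

lemma prod_weight_Suc: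
  "prod_weight g s (Suc x) j = prod_weight g s x j * (if s \<le> x then 1 + g x j / 2 else 1)"
  by (simp add: prod_weight_def not_le)

lemma prod_weight_pos:
  assumes "\<forall>y\<in>{s..<x}. -1 \<le> g y j"
  shows "0 < prod_weight g s x j"
  unfolding prod_weight_def
proof (intro prod_pos ballI)
  fix y
  assume "y \<in> {s..<x}"
  then show "0 < 1 + g y j / 2"
    using assms by force
qed

lemma prod_potential_step:
  fixes w g :: "nat \<Rightarrow> real"
  assumes N: "N \<ge> 1" and w: "\<forall>j\<in>{1..N}. 0 < w j" and g: "\<forall>j\<in>{1..N}. -1 \<le> g j"
  shows "ln (\<Sum>j=1..N. w j * (1 + g j / 2))
           \<le> ln (\<Sum>j=1..N. w j) + (\<Sum>j=1..N. w j * g j) / (\<Sum>j=1..N. w j) / 2"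
proof -
  define W where "W = (\<Sum>j=1..N. w j)"
  define q where "q = (\<Sum>j=1..N. w j * g j) / W"
  have W_pos: "0 < W"
    unfolding W_def using N w by (intro sum_pos) auto
  have "(\<Sum>j=1..N. - w j) \<le> (\<Sum>j=1..N. w j * g j)"
  proof (intro sum_mono)
    fix j
    assume "j \<in> {1..N}"
    then have "w j * (-1) \<le> w j * g j"
      using w g by (intro mult_left_mono) (auto simp: less_imp_le)
    then show "- w j \<le> w j * g j"
      by simp
  qed
  then have "-1 \<le> q"
    using W_pos by (simp add: q_def W_def sum_negf le_divide_eq)
  then have pos: "0 < 1 + q / 2"
    by linarith
  have "(\<Sum>j=1..N. w j * (1 + g j / 2)) = W * (1 + q / 2)"
    using W_pos by (simp add: W_def q_def algebra_simps sum.distrib flip: sum_divide_distrib)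
  then have "ln (\<Sum>j=1..N. w j * (1 + g j / 2)) = ln W + ln (1 + q / 2)"
    using W_pos pos by (simp add: ln_mult)
  also have "ln (1 + q / 2) \<le> q / 2"
    using ln_le_minus_one[OF pos] by simp
  finally show ?thesis
    by (simp add: W_def q_def)
qed

text \<open>The potential \<open>ln (\<Sum>j. prod_weight g s x j)\<close> drops by at least half the loss of every
  round and never falls below the log-weight of a single expert.\<close>
lemma prod_regret_le:
  fixes g :: "nat \<Rightarrow> nat \<Rightarrow> real"
  assumes N: "N \<ge> 1" and g: "\<forall>x\<in>{s..<e}. \<forall>j\<in>{1..N}. -1 \<le> g x j \<and> g x j \<le> 0"
    and i: "i \<in> {1..N}"
  shows "(\<Sum>x\<in>{s..<e}. prod_loss g N s x) \<le> 2 * ln (real N) - 2 * (\<Sum>x\<in>{s..<e}. g x i)"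
proof -
  define \<Phi> where "\<Phi> x = ln (\<Sum>j=1..N. prod_weight g s x j)" for x
  have w_pos: "\<forall>j\<in>{1..N}. 0 < prod_weight g s x j" if "x \<le> e" for x
    using g that by (auto intro: prod_weight_pos)
  have potential: "(\<Sum>x\<in>{s..<e'}. prod_loss g N s x) \<le> 2 * (ln (real N) - \<Phi> e')" if "e' \<le> e" for e'
    using that
  proof (induction e')
    case 0
    then show ?case
      by (simp add: \<Phi>_def prod_weight_def)
  next
    case (Suc x)
    show ?case
    proof (cases "s \<le> x")
      case True
      have "\<Phi> (Suc x) \<le> \<Phi> x - prod_loss g N s x / 2"
        using prod_potential_step[OF N w_pos[of x], of "g x"] g True Suc.prems
        by (simp add: \<Phi>_def prod_loss_def prod_weight_Suc)
      with Suc True show ?thesis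
        by simp
    next
      case False
      then show ?thesis
        using Suc by (simp add: \<Phi>_def prod_weight_def)
    qed
  qed
  have "ln (prod_weight g s e i) = (\<Sum>x\<in>{s..<e}. ln (1 + g x i / 2))"
    unfolding prod_weight_def using g i by (intro ln_prod) force+
  also have "(\<Sum>x\<in>{s..<e}. g x i) \<le> \<dots>"
    using g i by (intro sum_mono ln_one_plus_half_ge) auto
  also have "ln (prod_weight g s e i) \<le> \<Phi> e"
  proof -
    have w_e: "\<forall>j\<in>{1..N}. 0 < prod_weight g s e j"
      using w_pos by simp
    have "prod_weight g s e i \<le> (\<Sum>j=1..N. prod_weight g s e j)"
      by (rule member_le_sum[OF i]) (use w_e in \<open>auto simp: less_imp_le\<close>)
    moreover have "0 < prod_weight g s e i"
      using w_e i by blast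
    ultimately show ?thesis
      unfolding \<Phi>_def by simp
  qed
  finally show ?thesis
    using potential[of e] by simp
qed

section \<open>AR-Prod\<close>

definition variation :: "(nat \<Rightarrow> real) \<Rightarrow> nat \<Rightarrow> nat \<Rightarrow> real" where
  "variation m a b = (\<Sum>k\<in>{a<..b}. \<bar>m k - m (k - 1)\<bar>)"

lemma variation_nonneg: "0 \<le> variation m a b"
  by (simp add: variation_def sum_nonneg)

lemma variation_mono: "b \<le> b' \<Longrightarrow> variation m a b \<le> variation m a b'"
  unfolding variation_def by (intro sum_mono2) auto

lemma variation_Suc:
  "variation m a (Suc b) = variation m a b + (if a \<le> b then \<bar>m (Suc b) - m b\<bar> else 0)"
proof (cases "a \<le> b")
  case True
  then have "{a<..Suc b} = insert (Suc b) {a<..b}"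
    by auto
  with True show ?thesis
    by (simp add: variation_def)
qed (simp add: variation_def)

lemma VT_eq_variation: "VT m T = variation m 1 T"
  unfolding VT_def variation_def by (intro sum.cong) auto

lemma abs_diff_le_variation:
  "a \<le> b \<Longrightarrow> \<bar>m b - m a\<bar> \<le> variation m a b"
proof (induction b rule: dec_induct)
  case (step b)
  then show ?case
    using abs_triangle_ineq[of "m (Suc b) - m b" "m b - m a"] by (simp add: variation_Suc)
qed (simp add: variation_def)

lemma mult_le_sqrt_increment:
  fixes L a x T :: real
  assumes T: "0 \<le> T" and a: "0 < a" and x: "0 \<le> x" and L: "L \<le> sqrt (T / (a + x))"
  shows "L * x \<le> 2 * sqrt T * (sqrt (a + x) - sqrt a)"
proof -
  have "x = (sqrt (a + x) - sqrt a) * (sqrt (a + x) + sqrt a)"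
    using a x by (simp add: algebra_simps)
  also have "\<dots> \<le> (sqrt (a + x) - sqrt a) * (2 * sqrt (a + x))"
    using a x by (intro mult_left_mono) auto
  also have "\<dots> = 2 * (sqrt (a + x) - sqrt a) * sqrt (a + x)"
    by simp
  finally have "x / sqrt (a + x) \<le> 2 * (sqrt (a + x) - sqrt a)"
    using a x by (simp add: pos_divide_le_eq)
  have "L * x \<le> sqrt T / sqrt (a + x) * x"
    using L x by (intro mult_right_mono) (simp_all add: real_sqrt_divide)
  also have "\<dots> = sqrt T * (x / sqrt (a + x))"
    by simp
  also have "\<dots> \<le> sqrt T * (2 * (sqrt (a + x) - sqrt a))"
    using \<open>x / sqrt (a + x) \<le> 2 * (sqrt (a + x) - sqrt a)\<close> T by (intro mult_left_mono) auto
  finally show ?thesis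
    by (simp add: algebra_simps)
qed

definition gainA :: "nat \<Rightarrow> (nat \<Rightarrow> real) \<Rightarrow> (nat \<Rightarrow> real) \<Rightarrow> nat \<Rightarrow> nat \<Rightarrow> real" where
  "gainA T v m u i = r (min (v u) (real i / real T)) (v u) (m u) - max (v u - m u) 0"

definition rewardA :: "nat \<Rightarrow> (nat \<Rightarrow> real) \<Rightarrow> (nat \<Rightarrow> real) \<Rightarrow> nat \<Rightarrow> real" where
  "rewardA T v m t = measure_pmf.expectation (bidA T v m t) (\<lambda>b. r b (v t) (m t))"

definition regretA :: "nat \<Rightarrow> (nat \<Rightarrow> real) \<Rightarrow> (nat \<Rightarrow> real) \<Rightarrow> nat \<Rightarrow> real" where
  "regretA T v m t = max (v t - m t) 0 - rewardA T v m t"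

lemma gainA_bounds:
  assumes hv: "\<forall>t\<in>{1..T}. v t \<in> {0..1} \<and> m t \<in> {0..1}" and u: "u \<in> {1..T}"
  shows "-1 \<le> gainA T v m u i" "gainA T v m u i \<le> 0"
proof -
  have "v u \<le> 1" "0 \<le> m u"
    using hv u by auto
  then show "-1 \<le> gainA T v m u i" "gainA T v m u i \<le> 0"
    using r_min_bid_nonneg[of "v u" "real i / real T" "m u"] r_min_bid_le[of "v u" "real i / real T" "m u"]
    by (auto simp: gainA_def max_def)
qed

lemma gainA_grid_expert:
  assumes T1: "T \<ge> 1" and hv: "\<forall>t\<in>{1..T}. v t \<in> {0..1} \<and> m t \<in> {0..1}"
    and s: "s \<in> {1..T}" and e: "e \<le> T"
  obtains i where "i \<in> {1..T}" "\<forall>x\<in>{s..e}. - gainA T v m x i \<le> 2 * variation m s e + 1 / real T"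
proof -
  define V where "V = variation m s e"
  define M where "M = min 1 (m s + V)"
  have "0 \<le> M" "M \<le> 1"
    using hv s variation_nonneg[of m s e] by (auto simp: M_def V_def)
  then obtain i where i: "i \<in> {1..T}" "M \<le> real i / real T" "real i / real T \<le> M + 1 / real T"
    using grid_point_above T1 by metis
  have "- gainA T v m x i \<le> 2 * V + 1 / real T" if x: "x \<in> {s..e}" for x
  proof -
    have "\<bar>m x - m s\<bar> \<le> V"
      using abs_diff_le_variation[of s x m] variation_mono[of x e m s] x by (simp add: V_def)
    moreover have "m x \<le> 1"
      using hv s x e by auto
    ultimately have "m x \<le> M" "M \<le> m x + 2 * V"
      by (auto simp: M_def)
    then have "- gainA T v m x i \<le> real i / real T - m x"
      using regret_min_bid_le[of "m x" "real i / real T" "v x"] i(2) by (simp add: gainA_def)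
    then show ?thesis
      using i(3) \<open>M \<le> m x + 2 * V\<close> by linarith
  qed
  then show ?thesis
    using that i(1) by (simp add: V_def)
qed

lemma prodState_Suc_eq:
  assumes "prodState T v m t = (s, Vp, w)"
  shows "prodState T v m (Suc t) =
    (if real (Suc t - s + 1) < sqrt (real T / (Vp + variation m s (Suc t) + 1 / real T))
     then (s, Vp, \<lambda>i. w i * (1 + gainA T v m (Suc t) i / 2))
     else (Suc (Suc t), Vp + variation m s (Suc t), \<lambda>i. 1))"
  using assms by (simp add: gainA_def variation_def Let_def)

text \<open>In the state after round \<open>t\<close>, \<open>s\<close> is the first round of the current batch and \<open>Vp\<close> the
  variation spent in the completed batches.\<close>
lemma prodState_batch:
  assumes "prodState T v m t = (s, Vp, w)"
  shows "1 \<le> s" "s \<le> Suc t"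
    and "\<forall>x\<in>{s..Suc t}. snd (snd (prodState T v m (x - 1))) = prod_weight (gainA T v m) s x"
    and "0 \<le> Vp" "Vp + variation m s t \<le> variation m 1 t"
    and "s \<le> t \<Longrightarrow> real (Suc t - s) < sqrt (real T / (Vp + variation m s t + 1 / real T))"
proof -
  have "1 \<le> s \<and> s \<le> Suc t
    \<and> (\<forall>x\<in>{s..Suc t}. snd (snd (prodState T v m (x - 1))) = prod_weight (gainA T v m) s x)
    \<and> 0 \<le> Vp \<and> Vp + variation m s t \<le> variation m 1 t
    \<and> (s \<le> t \<longrightarrow> real (Suc t - s) < sqrt (real T / (Vp + variation m s t + 1 / real T)))"
    using assms
  proof (induction t arbitrary: s Vp w)
    case 0
    then show ?case
      by (auto simp: prod_weight_def variation_def)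
  next
    case (Suc t)
    obtain s0 Vp0 w0 where st0: "prodState T v m t = (s0, Vp0, w0)"
      by (cases "prodState T v m t")
    note IH = Suc.IH[OF st0]
    have var_le: "Vp0 + variation m s0 (Suc t) \<le> variation m 1 (Suc t)"
      using IH by (auto simp: variation_Suc)
    show ?case
    proof (cases "real (Suc t - s0 + 1) < sqrt (real T / (Vp0 + variation m s0 (Suc t) + 1 / real T))")
      case True
      then have st: "s = s0" "Vp = Vp0" "w = (\<lambda>i. w0 i * (1 + gainA T v m (Suc t) i / 2))"
        using Suc.prems prodState_Suc_eq[OF st0] by auto
      have "\<forall>x\<in>{s0..Suc t}. snd (snd (prodState T v m (x - 1))) = prod_weight (gainA T v m) s0 x"
        and "Suc t \<in> {s0..Suc t}"
        using IH by auto
      then have "snd (snd (prodState T v m (Suc t - 1))) = prod_weight (gainA T v m) s0 (Suc t)"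
        by blast
      then have "w0 = prod_weight (gainA T v m) s0 (Suc t)"
        using st0 by simp
      then have "w = prod_weight (gainA T v m) s0 (Suc (Suc t))"
        using IH by (auto simp: st prod_weight_Suc)
      then have "\<forall>x\<in>{s0..Suc (Suc t)}.
          snd (snd (prodState T v m (x - 1))) = prod_weight (gainA T v m) s0 x"
        using IH Suc.prems st by (auto simp: le_Suc_eq)
      with True IH var_le show ?thesis
        by (auto simp: st Suc_diff_le)
    next
      case False
      then have st: "s = Suc (Suc t)" "Vp = Vp0 + variation m s0 (Suc t)" "w = (\<lambda>i. 1)"
        using Suc.prems prodState_Suc_eq[OF st0] by auto
      have "prod_weight (gainA T v m) s s = (\<lambda>i. 1)"
        by (auto simp: prod_weight_def)
      with IH var_le show ?thesis
        using Suc.prems by (auto simp: st variation_nonneg variation_def)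
    qed
  qed
  then show "1 \<le> s" "s \<le> Suc t"
    and "\<forall>x\<in>{s..Suc t}. snd (snd (prodState T v m (x - 1))) = prod_weight (gainA T v m) s x"
    and "0 \<le> Vp" "Vp + variation m s t \<le> variation m 1 t"
    and "s \<le> t \<Longrightarrow> real (Suc t - s) < sqrt (real T / (Vp + variation m s t + 1 / real T))"
    by auto
qed

lemma prod_weight_gainA_pos:
  assumes hv: "\<forall>t\<in>{1..T}. v t \<in> {0..1} \<and> m t \<in> {0..1}" and "1 \<le> s" "x \<le> Suc T"
  shows "0 < prod_weight (gainA T v m) s x j"
  using assms gainA_bounds(1)[OF hv] by (intro prod_weight_pos) auto

lemma regretA_eq_prod_loss:
  assumes T1: "T \<ge> 1"
    and w: "snd (snd (prodState T v m (x - 1))) = prod_weight (gainA T v m) s x"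
    and pos: "\<forall>j\<in>{1..T}. 0 < prod_weight (gainA T v m) s x j"
  shows "regretA T v m x = prod_loss (gainA T v m) T s x"
proof -
  define p where "p = prod_weight (gainA T v m) s x"
  define W where "W = (\<Sum>j=1..T. p j)"
  define \<mu> where "\<mu> = max (v x - m x) 0"
  have W_pos: "0 < W"
    unfolding W_def p_def using T1 pos by (intro sum_pos) auto
  have "rewardA T v m x = (\<Sum>j=1..T. p j * r (min (v x) (real j / real T)) (v x) (m x)) / W"
    unfolding rewardA_def bidA_def w W_def p_def using expectation_wpmf[OF T1 pos] by simp
  moreover have "prod_loss (gainA T v m) T s x
      = (\<mu> * W - (\<Sum>j=1..T. p j * r (min (v x) (real j / real T)) (v x) (m x))) / W"
    by (simp add: prod_loss_def gainA_def W_def p_def \<mu>_def right_diff_distrib sum_subtractf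
        sum_distrib_left mult.commute)
  ultimately show ?thesis
    using W_pos by (simp add: regretA_def \<mu>_def diff_divide_distrib)
qed

text \<open>The grid expert closest above \<open>m\<^sub>s + V\<close> (with \<open>V\<close> the variation before the last round of
  the batch) loses at most \<open>2 V + 1/T\<close> per round, and the length threshold bounds
  \<open>(e - s) V\<close> by an increment of \<open>2 \<surd>T \<surd>(Vp + V + 1/T)\<close>.\<close>
lemma prod_batch_regret_le:
  assumes T1: "T \<ge> 1" and hv: "\<forall>t\<in>{1..T}. v t \<in> {0..1} \<and> m t \<in> {0..1}"
    and s: "1 \<le> s" "s \<le> e" "e \<le> T" and Vp: "0 \<le> Vp"
    and w: "\<forall>x\<in>{s..e}. snd (snd (prodState T v m (x - 1))) = prod_weight (gainA T v m) s x"
    and len: "real (e - s) \<le> sqrt (real T / (Vp + variation m s (e - 1) + 1 / real T))"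
  shows "(\<Sum>x\<in>{s..e}. regretA T v m x)
    \<le> 2 * ln (real T) + 2 + 2 * real (e - s) / real T
       + 8 * sqrt (real T) * (sqrt (Vp + variation m s e + 1 / real T) - sqrt (Vp + 1 / real T))"
proof -
  define g where "g = gainA T v m"
  define Vm where "Vm = variation m s (e - 1)"
  define X where "X = Vp + Vm + 1 / real T"
  have Vm: "0 \<le> Vm" "Vm \<le> variation m s e"
    using variation_nonneg variation_mono[of "e - 1" e] by (auto simp: Vm_def)
  have "s \<in> {1..T}" "e - 1 \<le> T"
    using s by auto
  then obtain i where i: "i \<in> {1..T}" "\<forall>x\<in>{s..e - 1}. - g x i \<le> 2 * Vm + 1 / real T"
    unfolding g_def Vm_def by (rule gainA_grid_expert[OF T1 hv])
  have "(\<Sum>x\<in>{s..e}. regretA T v m x) = (\<Sum>x\<in>{s..<Suc e}. prod_loss g T s x)"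
  proof (rule sum.cong)
    fix x
    assume "x \<in> {s..<Suc e}"
    then show "regretA T v m x = prod_loss g T s x"
      unfolding g_def using w s
      by (intro regretA_eq_prod_loss[OF T1]) (auto intro: prod_weight_gainA_pos[OF hv])
  qed auto
  also have "\<dots> \<le> 2 * ln (real T) + 2 * (\<Sum>x\<in>{s..<Suc e}. - g x i)"
    using prod_regret_le[OF T1 _ i(1), of s "Suc e" g] s gainA_bounds[OF hv]
    by (auto simp: g_def sum_negf)
  finally have loss: "(\<Sum>x\<in>{s..e}. regretA T v m x) \<le> 2 * ln (real T) + 2 * (\<Sum>x\<in>{s..<Suc e}. - g x i)" .
  have comparator: "(\<Sum>x\<in>{s..<Suc e}. - g x i) \<le> real (e - s) * (2 * Vm + 1 / real T) + 1"
  proof -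
    have "(\<Sum>x\<in>{s..<e}. - g x i) \<le> (\<Sum>x\<in>{s..<e}. 2 * Vm + 1 / real T)"
      using i(2) by (intro sum_mono) auto
    moreover have "- g e i \<le> 1"
      using gainA_bounds(1)[OF hv, of e] s by (simp add: g_def)
    ultimately show ?thesis
      using s by simp
  qed
  have length_variation: "real (e - s) * Vm \<le> 2 * sqrt (real T) * (sqrt X - sqrt (Vp + 1 / real T))"
    using mult_le_sqrt_increment[of "real T" "Vp + 1 / real T" Vm "real (e - s)"] Vp Vm T1 len
    by (simp add: X_def Vm_def add_nonneg_pos add_ac)
  have "sqrt (real T) * (sqrt X - sqrt (Vp + 1 / real T))
      \<le> sqrt (real T) * (sqrt (Vp + variation m s e + 1 / real T) - sqrt (Vp + 1 / real T))"
    using Vm by (intro mult_left_mono) (simp_all add: X_def)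
  moreover have "real (e - s) * (2 * Vm + 1 / real T) = 2 * (real (e - s) * Vm) + real (e - s) / real T"
    by (simp add: algebra_simps)
  ultimately show ?thesis
    using loss comparator length_variation by (simp add: algebra_simps)
qed

text \<open>Regret of AR-Prod over completed batches covering the rounds before \<open>s\<close> and spending the
  variation \<open>Vp\<close>: the \<open>\<surd>\<close>-increments of the batch bounds telescope into the first term, and
  each batch costs \<open>2 ln T + 2\<close>; there are at most \<open>(s - 1) \<surd>((Vp + 1/T) / T)\<close> of them,
  since each is longer than \<open>\<surd>(T / (Vp + 1/T))\<close>.\<close>
definition completed_regret_bound :: "nat \<Rightarrow> real \<Rightarrow> nat \<Rightarrow> real" where
  "completed_regret_bound T Vp s =
     8 * sqrt (real T) * sqrt (Vp + 1 / real T) + 2 * real (s - 1) / real T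
     + (2 * ln (real T) + 2) * real (s - 1) * sqrt ((Vp + 1 / real T) / real T)"

lemma completed_regret_bound_step:
  assumes T1: "T \<ge> 1" and Vp: "0 \<le> Vp" and Vc: "0 \<le> Vc" and s: "1 \<le> s" "s \<le> e"
    and long: "sqrt (real T / (Vp + Vc + 1 / real T)) \<le> real (e - s + 1)"
  shows "completed_regret_bound T Vp s
           + (2 * ln (real T) + 2 + 2 * real (e - s) / real T
              + 8 * sqrt (real T) * (sqrt (Vp + Vc + 1 / real T) - sqrt (Vp + 1 / real T)))
         \<le> completed_regret_bound T (Vp + Vc) (Suc e)"
proof -
  define X where "X = Vp + Vc + 1 / real T"
  define K where "K = 2 * ln (real T) + 2"
  have T_pos: "0 < real T"
    using T1 by simp
  have X_pos: "0 < X"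
    using Vp Vc T_pos by (simp add: X_def add_nonneg_pos)
  have K_nonneg: "0 \<le> K"
    using T1 by (simp add: K_def)
  have "1 = sqrt (real T / X) * sqrt (X / real T)"
    using X_pos T_pos by (simp flip: real_sqrt_mult)
  also have "\<dots> \<le> real (e - s + 1) * sqrt (X / real T)"
    using long X_pos T_pos unfolding X_def[symmetric] by (intro mult_right_mono) auto
  finally have "K \<le> K * (real (e - s + 1) * sqrt (X / real T))"
    using K_nonneg mult_left_mono[of 1 _ K] by simp
  moreover have "K * real (s - 1) * sqrt ((Vp + 1 / real T) / real T) \<le> K * real (s - 1) * sqrt (X / real T)"
    using Vc T_pos K_nonneg by (intro mult_left_mono) (simp_all add: X_def divide_right_mono)
  moreover have "K * real (Suc e - 1) * sqrt (X / real T)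
      = K * real (s - 1) * sqrt (X / real T) + K * (real (e - s + 1) * sqrt (X / real T))"
    using s by (simp add: algebra_simps of_nat_diff)
  moreover have "2 * real (s - 1) / real T + 2 * real (e - s) / real T \<le> 2 * real (Suc e - 1) / real T"
    using s T_pos by (simp add: divide_right_mono flip: add_divide_distrib)
  ultimately show ?thesis
    unfolding completed_regret_bound_def X_def[symmetric] K_def[symmetric] by (simp add: algebra_simps)
qed

lemma prod_completed_regret_le:
  assumes T1: "T \<ge> 1" and hv: "\<forall>t\<in>{1..T}. v t \<in> {0..1} \<and> m t \<in> {0..1}"
  shows "t \<le> T \<Longrightarrow> prodState T v m t = (s, Vp, w)
    \<Longrightarrow> (\<Sum>x\<in>{1..<s}. regretA T v m x) \<le> completed_regret_bound T Vp s"
proof (induction t arbitrary: s Vp w)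
  case 0
  then show ?case
    by (simp add: completed_regret_bound_def)
next
  case (Suc t)
  obtain s0 Vp0 w0 where st0: "prodState T v m t = (s0, Vp0, w0)"
    by (cases "prodState T v m t")
  note batch = prodState_batch[OF st0]
  have IH: "(\<Sum>x\<in>{1..<s0}. regretA T v m x) \<le> completed_regret_bound T Vp0 s0"
    using Suc st0 by simp
  define Vc where "Vc = variation m s0 (Suc t)"
  show ?case
  proof (cases "real (Suc t - s0 + 1) < sqrt (real T / (Vp0 + Vc + 1 / real T))")
    case True
    then show ?thesis
      using Suc.prems IH prodState_Suc_eq[OF st0] by (simp add: Vc_def)
  next
    case False
    then have st: "s = Suc (Suc t)" "Vp = Vp0 + Vc"
      using Suc.prems prodState_Suc_eq[OF st0] by (auto simp: Vc_def)
    have "0 < Vp0 + variation m s0 t + 1 / real T"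
      using batch(4) variation_nonneg[of m s0 t] T1 by (simp add: add_nonneg_pos)
    then have "real (Suc t - s0) \<le> sqrt (real T / (Vp0 + variation m s0 (Suc t - 1) + 1 / real T))"
      using batch(2,6) by (cases "s0 \<le> t") auto
    then have batch_regret: "(\<Sum>x\<in>{s0..Suc t}. regretA T v m x)
        \<le> 2 * ln (real T) + 2 + 2 * real (Suc t - s0) / real T
           + 8 * sqrt (real T) * (sqrt (Vp0 + Vc + 1 / real T) - sqrt (Vp0 + 1 / real T))"
      using prod_batch_regret_le[OF T1 hv batch(1,2) _ batch(4)] batch(3) Suc.prems
      by (simp add: Vc_def)
    have "{1..<Suc (Suc t)} = {1..<s0} \<union> {s0..Suc t}"
      using batch(1,2) by auto
    then have "(\<Sum>x\<in>{1..<Suc (Suc t)}. regretA T v m x)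
        = (\<Sum>x\<in>{1..<s0}. regretA T v m x) + (\<Sum>x\<in>{s0..Suc t}. regretA T v m x)"
      by (simp add: sum.union_disjoint ivl_disj_int)
    moreover have "completed_regret_bound T Vp0 s0
        + (2 * ln (real T) + 2 + 2 * real (Suc t - s0) / real T
           + 8 * sqrt (real T) * (sqrt (Vp0 + Vc + 1 / real T) - sqrt (Vp0 + 1 / real T)))
        \<le> completed_regret_bound T (Vp0 + Vc) (Suc (Suc t))"
      using False by (intro completed_regret_bound_step[OF T1 batch(4) _ batch(1,2)])
        (simp_all add: Vc_def variation_nonneg)
    ultimately show ?thesis
      unfolding st using IH batch_regret by linarith
  qed
qed

lemma completed_regret_bound_le:
  assumes T1: "T \<ge> 1" and s: "s \<le> Suc T" and Vp: "0 \<le> Vp" "Vp \<le> V"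
  shows "completed_regret_bound T Vp s
    \<le> 8 * sqrt (real T) * sqrt (Vp + 1 / real T) + 2 * real (s - 1) / real T
       + (2 * ln (real T) + 2) * (sqrt (real T) * sqrt (V + 1 / real T))"
proof -
  have T_pos: "0 < real T"
    using T1 by simp
  have "real (s - 1) * sqrt ((Vp + 1 / real T) / real T) \<le> real T * sqrt ((V + 1 / real T) / real T)"
    using s Vp T_pos by (intro mult_mono) (simp_all add: divide_right_mono)
  also have "\<dots> = sqrt (real T) * sqrt (V + 1 / real T)"
    using T_pos by (simp add: real_sqrt_divide field_simps)
  finally show ?thesis
    unfolding completed_regret_bound_def using T1 by (simp add: mult.assoc mult_left_mono)
qed

lemma prod_final_batch_regret_le:
  assumes T1: "T \<ge> 1" and hv: "\<forall>t\<in>{1..T}. v t \<in> {0..1} \<and> m t \<in> {0..1}"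
    and st: "prodState T v m T = (s, Vp, w)"
  shows "(\<Sum>x\<in>{s..T}. regretA T v m x)
    \<le> 2 * ln (real T) + 2 + 2 * real (T - s) / real T
       + 8 * sqrt (real T) * (sqrt (Vp + variation m s T + 1 / real T) - sqrt (Vp + 1 / real T))"
proof (cases "s \<le> T")
  case True
  note batch = prodState_batch[OF st]
  have "real (T - s) \<le> sqrt (real T / (Vp + variation m s T + 1 / real T))"
    using batch(6) True by simp
  also have "\<dots> \<le> sqrt (real T / (Vp + variation m s (T - 1) + 1 / real T))"
    using batch(4) variation_nonneg[of m s "T - 1"] variation_mono[of "T - 1" T m s] T1
    by (intro real_sqrt_le_mono divide_left_mono mult_pos_pos add_nonneg_pos) auto
  finally show ?thesis
    using prod_batch_regret_le[OF T1 hv batch(1) True order.refl batch(4)] batch(3) by simp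
next
  case False
  then show ?thesis
    using T1 variation_nonneg[of m s T] by simp
qed

lemma prod_regret_total_le:
  assumes T1: "T \<ge> 1" and hv: "\<forall>t\<in>{1..T}. v t \<in> {0..1} \<and> m t \<in> {0..1}"
  shows "(\<Sum>t=1..T. regretA T v m t)
    \<le> (2 * ln (real T) + 10) * sqrt (real T) * sqrt (VT m T + 1 / real T) + 2 * ln (real T) + 4"
proof -
  obtain s Vp w where st: "prodState T v m T = (s, Vp, w)"
    by (cases "prodState T v m T")
  note batch = prodState_batch[OF st]
  define V where "V = VT m T"
  define K where "K = 2 * ln (real T) + 2"
  have VpV: "Vp + variation m s T \<le> V"
    using batch(5) by (simp add: V_def VT_eq_variation)
  have "completed_regret_bound T Vp s
      \<le> 8 * sqrt (real T) * sqrt (Vp + 1 / real T) + 2 * real (s - 1) / real T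
         + K * (sqrt (real T) * sqrt (V + 1 / real T))"
    unfolding K_def using completed_regret_bound_le[OF T1 batch(2,4)] VpV variation_nonneg[of m s T]
    by simp
  then have "(\<Sum>x\<in>{1..<s}. regretA T v m x)
      \<le> 8 * sqrt (real T) * sqrt (Vp + 1 / real T) + 2 * real (s - 1) / real T
         + K * (sqrt (real T) * sqrt (V + 1 / real T))"
    using prod_completed_regret_le[OF T1 hv order.refl st] by linarith
  moreover have "(\<Sum>x\<in>{s..T}. regretA T v m x)
      \<le> K + 2 * real (T - s) / real T
         + 8 * sqrt (real T) * (sqrt (Vp + variation m s T + 1 / real T) - sqrt (Vp + 1 / real T))"
    using prod_final_batch_regret_le[OF T1 hv st] by (simp add: K_def)
  moreover have "(\<Sum>t=1..T. regretA T v m t)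
      = (\<Sum>x\<in>{1..<s}. regretA T v m x) + (\<Sum>x\<in>{s..T}. regretA T v m x)"
    using sum.atLeastLessThan_concat[of 1 s "Suc T" "regretA T v m"] batch(1,2)
    by (simp add: atLeastLessThanSuc_atLeastAtMost)
  moreover have "8 * sqrt (real T) * sqrt (Vp + 1 / real T)
      + 8 * sqrt (real T) * (sqrt (Vp + variation m s T + 1 / real T) - sqrt (Vp + 1 / real T))
      \<le> 8 * sqrt (real T) * sqrt (V + 1 / real T)"
    using VpV by (simp add: algebra_simps mult_left_mono)
  moreover have "2 * real (s - 1) / real T + 2 * real (T - s) / real T \<le> 2"
    using batch(1,2) T1 by (simp add: divide_le_eq flip: add_divide_distrib)
  moreover have "(2 * ln (real T) + 10) * sqrt (real T) * sqrt (V + 1 / real T)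
      = 8 * sqrt (real T) * sqrt (V + 1 / real T) + K * (sqrt (real T) * sqrt (V + 1 / real T))"
    by (simp add: K_def algebra_simps)
  ultimately show ?thesis
    unfolding V_def[symmetric] K_def by linarith
qed

section \<open>AR-OMD\<close>

definition rewardB :: "nat \<Rightarrow> real \<Rightarrow> (nat \<Rightarrow> real) \<Rightarrow> (nat \<Rightarrow> real) \<Rightarrow> nat \<Rightarrow> real" where
  "rewardB N eta v m t = measure_pmf.expectation (bidB N eta v m t) (\<lambda>b. r b (v t) (m t))"

lemma rewardB_nonneg: "0 \<le> rewardB N eta v m t"
  unfolding rewardB_def bidB_def by (simp add: r_min_bid_nonneg integral_nonneg_AE)

lemma omdStart_batch:
  assumes "1 \<le> t"
  shows "1 \<le> omdStart m t" "omdStart m t \<le> t"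
    and "\<forall>s. omdStart m t < s \<and> s < t \<longrightarrow> m s = m (s - 1)"
proof -
  have "1 \<le> omdStart m t \<and> omdStart m t \<le> t \<and> (\<forall>s. omdStart m t < s \<and> s < t \<longrightarrow> m s = m (s - 1))"
    using assms
  proof (induction t)
    case (Suc t)
    show ?case
    proof (cases "t = 0")
      case False
      then have IH: "1 \<le> omdStart m t" "omdStart m t \<le> t"
        "\<forall>s. omdStart m t < s \<and> s < t \<longrightarrow> m s = m (s - 1)"
        using Suc.IH by auto
      show ?thesis
      proof (cases "t \<noteq> omdStart m t \<and> m t \<noteq> m (t - 1)")
        case True
        with False show ?thesis
          by (simp add: Let_def)
      next
        case no_change: False
        have "omdStart m (Suc t) = (let t0 = omdStart m t in
            if t \<noteq> t0 \<and> m t \<noteq> m (t - 1) then Suc t else t0)"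
          using False by simp
        then have start: "omdStart m (Suc t) = omdStart m t"
          by (simp only: Let_def if_not_P[OF no_change])
        have "m s = m (s - 1)" if "omdStart m t < s" "s < Suc t" for s
          using IH(3) no_change that by (cases "s = t") auto
        with IH start show ?thesis
          by auto
      qed
    qed simp
  qed simp
  then show "1 \<le> omdStart m t" "omdStart m t \<le> t"
    and "\<forall>s. omdStart m t < s \<and> s < t \<longrightarrow> m s = m (s - 1)"
    by auto
qed

lemma constant_if_no_change:
  fixes a b x :: nat
  assumes "\<forall>s. a < s \<and> s \<le> b \<longrightarrow> m s = m (s - 1)" and "a \<le> x" "x \<le> b"
  shows "m x = m a"
  using assms(2)
proof (induction x rule: dec_induct)
  case (step n)
  have "m (Suc n) = m n"
    using assms(1)[rule_format, of "Suc n"] step.hyps assms(3) by simp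
  with step.IH show ?case
    by simp
qed simp

lemma mult_exp_neg_le:
  fixes \<eta> y :: real
  assumes "0 < \<eta>"
  shows "y * exp (- (\<eta> * y)) \<le> 1 / \<eta>"
proof -
  have "\<eta> * y \<le> exp (\<eta> * y)"
    using exp_ge_add_one_self[of "\<eta> * y"] by linarith
  then show ?thesis
    using assms by (simp add: exp_minus field_simps)
qed

text \<open>Relative to expert \<open>k\<close>, expert \<open>i\<close> has weight \<open>exp (- \<eta> y)\<close> with \<open>y = H k - H i \<ge> 0\<close>,
  and \<open>y exp (- \<eta> y) \<le> 1 / \<eta>\<close>.\<close>
lemma exp_weights_regret_le_dominant:
  fixes H \<rho> :: "nat \<Rightarrow> real"
  assumes N: "N \<ge> 1" and \<eta>: "0 < \<eta>" and k: "k \<in> {1..N}"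
    and dom: "\<forall>i\<in>{1..N}. 0 \<le> \<rho> k - \<rho> i \<and> \<rho> k - \<rho> i \<le> H k - H i"
  shows "\<rho> k - (\<Sum>i=1..N. exp (\<eta> * H i) * \<rho> i) / (\<Sum>i=1..N. exp (\<eta> * H i)) \<le> real N / \<eta>"
proof -
  define e where "e i = exp (\<eta> * H i)" for i
  define Z where "Z = (\<Sum>i=1..N. e i)"
  have e_pos: "0 < e i" for i
    by (simp add: e_def)
  have e_le_Z: "e k \<le> Z"
    unfolding Z_def using k e_pos by (intro member_le_sum) (auto intro: less_imp_le)
  have Z_pos: "0 < Z"
    using e_le_Z e_pos[of k] by linarith
  have gap: "0 \<le> H k - H i" if "i \<in> {1..N}" for i
    using dom that by force
  have "(\<Sum>i=1..N. e i * (\<rho> k - \<rho> i)) = \<rho> k * Z - (\<Sum>i=1..N. e i * \<rho> i)"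
    by (simp add: Z_def right_diff_distrib sum_subtractf sum_distrib_left mult.commute)
  then have "\<rho> k - (\<Sum>i=1..N. e i * \<rho> i) / Z = (\<Sum>i=1..N. e i * (\<rho> k - \<rho> i)) / Z"
    using e_le_Z e_pos[of k] by (simp add: field_simps)
  also have "\<dots> \<le> (\<Sum>i=1..N. e i * (H k - H i)) / Z"
    using dom e_pos Z_pos
    by (intro divide_right_mono sum_mono mult_left_mono) (auto intro: less_imp_le)
  also have "\<dots> \<le> (\<Sum>i=1..N. e i * (H k - H i)) / e k"
    using gap e_pos e_le_Z mult_pos_pos[OF Z_pos e_pos[of k]]
    by (intro divide_left_mono sum_nonneg mult_nonneg_nonneg) (auto intro: less_imp_le)
  also have "\<dots> = (\<Sum>i=1..N. (H k - H i) * exp (- (\<eta> * (H k - H i))))"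
    unfolding sum_divide_distrib
  proof (intro sum.cong refl)
    fix i
    have "exp (- (\<eta> * (H k - H i))) = exp (\<eta> * H i - \<eta> * H k)"
      by (simp add: right_diff_distrib)
    also have "\<dots> = e i / e k"
      by (simp add: e_def exp_diff)
    finally have "exp (- (\<eta> * (H k - H i))) = e i / e k" .
    then show "e i * (H k - H i) / e k = (H k - H i) * exp (- (\<eta> * (H k - H i)))"
      by simp
  qed
  also have "\<dots> \<le> (\<Sum>i=1..N. 1 / \<eta>)"
    using \<eta> by (intro sum_mono mult_exp_neg_le)
  finally show ?thesis
    by (simp add: e_def Z_def)
qed

lemma bidB_stable_round:
  assumes t: "1 \<le> t" and stable: "m t = m (t - 1)"
  shows "bidB N eta v m t = map_pmf (\<lambda>i. min (v t) (real i / real N))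
    (wpmf N (\<lambda>i. exp (eta * (\<Sum>s\<in>{omdStart m t..t}. r (min (v s) (real i / real N)) (v s) (m t)))))"
proof -
  define t0 where "t0 = omdStart m t"
  define M where "M = m t"
  have t0: "1 \<le> t0" "t0 \<le> t"
    using omdStart_batch[OF t] by (auto simp: t0_def)
  have "\<forall>s. t0 < s \<and> s \<le> t \<longrightarrow> m s = m (s - 1)"
    using omdStart_batch(3)[OF t] stable by (auto simp: t0_def le_less)
  then have const: "m s = M" if "s \<in> {t0..t}" for s
    using constant_if_no_change[of t0 t m s] constant_if_no_change[of t0 t m t] that t0
    by (simp add: M_def)
  have "{t0..t} = insert t {t0..<t}"
    using t0 by auto
  then have "(\<Sum>s\<in>{t0..<t}. r (min (v s) (real i / real N)) (v s) (m s))
      + r (min (v t) (real i / real N)) (v t) (m (t - 1))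
      = (\<Sum>s\<in>{t0..t}. r (min (v s) (real i / real N)) (v s) M)" for i
    using const stable by (simp add: M_def add.commute)
  then show ?thesis
    by (simp add: bidB_def t0_def M_def)
qed

lemma regretB_stable_round_le:
  assumes N1: "N \<ge> 1" and eta: "0 < eta" and hv: "\<forall>t\<in>{1..T}. v t \<in> {0..1} \<and> m t \<in> {0..1}"
    and t: "t \<in> {1..T}" and stable: "m t = m (t - 1)"
  shows "max (v t - m t) 0 - rewardB N eta v m t \<le> 1 / real N + real N / eta"
proof -
  define t0 where "t0 = omdStart m t"
  define M where "M = m t"
  define \<rho> where "\<rho> s i = r (min (v s) (real i / real N)) (v s) M" for s i
  define H where "H i = (\<Sum>s\<in>{t0..t}. \<rho> s i)" for i
  have t0: "t0 \<le> t"
    using omdStart_batch[of t m] t by (simp add: t0_def)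
  have "bidB N eta v m t = map_pmf (\<lambda>i. min (v t) (real i / real N)) (wpmf N (\<lambda>i. exp (eta * H i)))"
    using bidB_stable_round[of t m] t stable by (simp add: H_def \<rho>_def M_def t0_def)
  then have reward: "rewardB N eta v m t
      = (\<Sum>i=1..N. exp (eta * H i) * \<rho> t i) / (\<Sum>i=1..N. exp (eta * H i))"
    using expectation_wpmf[OF N1, of "\<lambda>i. exp (eta * H i)"] by (simp add: rewardB_def \<rho>_def M_def)
  have "0 \<le> M" "M \<le> 1"
    using hv t by (auto simp: M_def)
  then obtain k where k: "k \<in> {1..N}" "M \<le> real k / real N" "real k / real N \<le> M + 1 / real N"
    and least: "\<And>j. j \<ge> 1 \<Longrightarrow> M \<le> real j / real N \<Longrightarrow> k \<le> j"
    using grid_point_above N1 by metis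
  have best: "\<rho> s i \<le> \<rho> s k" if "i \<in> {1..N}" for s i
    unfolding \<rho>_def
  proof (rule r_min_bid_le_least_winning)
    show "M \<le> real k / real N"
      by (fact k(2))
    show "real k / real N \<le> real i / real N" if "M \<le> real i / real N"
      using least[of i] that \<open>i \<in> {1..N}\<close> by (simp add: divide_right_mono)
  qed
  have "\<forall>i\<in>{1..N}. 0 \<le> \<rho> t k - \<rho> t i \<and> \<rho> t k - \<rho> t i \<le> H k - H i"
  proof
    fix i
    assume i: "i \<in> {1..N}"
    have "\<rho> t k - \<rho> t i \<le> (\<Sum>s\<in>{t0..t}. \<rho> s k - \<rho> s i)"
      using best[OF i] t0 by (intro member_le_sum[where f = "\<lambda>s. \<rho> s k - \<rho> s i"]) auto
    then show "0 \<le> \<rho> t k - \<rho> t i \<and> \<rho> t k - \<rho> t i \<le> H k - H i"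
      using best[OF i, of t] by (simp add: H_def sum_subtractf)
  qed
  then have "\<rho> t k - rewardB N eta v m t \<le> real N / eta"
    unfolding reward using exp_weights_regret_le_dominant[OF N1 eta k(1)] by blast
  moreover have "max (v t - M) 0 - \<rho> t k \<le> 1 / real N"
    using regret_min_bid_le[OF k(2), of "v t"] k(3) by (simp add: \<rho>_def)
  ultimately show ?thesis
    by (simp add: M_def)
qed

lemma omd_regret_total_le:
  assumes N1: "N \<ge> 1" and eta: "0 < eta" and hv: "\<forall>t\<in>{1..T}. v t \<in> {0..1} \<and> m t \<in> {0..1}"
  shows "(\<Sum>t=1..T. max (v t - m t) 0 - rewardB N eta v m t)
           \<le> 1 + LT m T + real T * (1 / real N + real N / eta)"
proof -
  define changed where "changed t \<longleftrightarrow> m t \<noteq> m (t - 1)" for t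
  have round: "max (v t - m t) 0 - rewardB N eta v m t \<le> of_bool (changed t) + (1 / real N + real N / eta)"
    if t: "t \<in> {1..T}" for t
  proof (cases "changed t")
    case True
    have "v t \<le> 1" "0 \<le> m t"
      using hv t by auto
    then have "max (v t - m t) 0 \<le> 1"
      by simp
    moreover have "0 \<le> 1 / real N + real N / eta"
      using eta by simp
    ultimately show ?thesis
      using True rewardB_nonneg[of N eta v m t] by simp
  next
    case False
    then show ?thesis
      using regretB_stable_round_le[OF N1 eta hv t] by (simp add: changed_def)
  qed
  have "card {t\<in>{1..T}. changed t} \<le> card (insert 1 {t\<in>{2..T}. changed t})"
    by (intro card_mono) auto
  also have "\<dots> \<le> Suc (card {t\<in>{2..T}. changed t})"
    by (rule card_insert_le_m1) auto
  finally have "real (card {t\<in>{1..T}. changed t}) \<le> 1 + LT m T"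
    by (simp add: LT_def changed_def)
  moreover have "(\<Sum>t=1..T. max (v t - m t) 0 - rewardB N eta v m t)
      \<le> (\<Sum>t=1..T. of_bool (changed t) + (1 / real N + real N / eta))"
    using round by (intro sum_mono) auto
  ultimately show ?thesis
    by (simp add: sum.distrib sum_of_bool_eq Int_def conj_commute)
qed

section \<open>The combined policy\<close>

lemma ln_potential_step_le:
  fixes w e d :: real
  assumes w: "0 < w" and e: "0 < e" "e \<le> 1/2" and d: "\<bar>d\<bar> \<le> 1"
  shows "ln (w * (1 + e * d) + (1 - e)) \<le> ln (w + (1 - e)) + e * (w / (w + (1 - e))) * d"
proof -
  define W where "W = w + (1 - e)"
  define p where "p = w / W"
  have W: "0 < W"
    using w e by (simp add: W_def)
  have p: "0 \<le> p" "p \<le> 1"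
    using w e W by (simp_all add: p_def W_def)
  have "\<bar>e * p * d\<bar> \<le> 1/2 * 1 * 1"
    unfolding abs_mult using e p d by (intro mult_mono) auto
  then have pos: "0 < 1 + e * p * d"
    by linarith
  have "w * (1 + e * d) + (1 - e) = W * (1 + e * p * d)"
    using W by (simp add: p_def W_def field_simps)
  then have "ln (w * (1 + e * d) + (1 - e)) = ln W + ln (1 + e * p * d)"
    using W pos by (simp add: ln_mult)
  also have "ln (1 + e * p * d) \<le> e * p * d"
    using ln_le_minus_one[OF pos] by simp
  finally show ?thesis
    by (simp add: W_def p_def)
qed

lemma ln_weight_step_ge:
  fixes w e d :: real
  assumes w: "0 < w" and e: "0 < e" "e \<le> 1/2" and d: "\<bar>d\<bar> \<le> 1"
  shows "ln w + e * d - 2 * e\<^sup>2 \<le> ln (w * (1 + e * d))"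
proof -
  have ed: "\<bar>e * d\<bar> \<le> e"
    using e d by (simp add: abs_mult mult_left_le)
  then have "\<bar>ln (1 + e * d) - e * d\<bar> \<le> 2 * (e * d)\<^sup>2"
    using e by (intro abs_ln_one_plus_x_minus_x_bound) auto
  moreover have "(e * d)\<^sup>2 \<le> e\<^sup>2"
    using ed power_mono[of "\<bar>e * d\<bar>" e 2] by simp
  moreover have "ln (w * (1 + e * d)) = ln w + ln (1 + e * d)"
    using w ed e by (simp add: ln_mult)
  ultimately show ?thesis
    by linarith
qed

definition probA :: "nat \<Rightarrow> real \<Rightarrow> real" where
  "probA T w = w / (w + (1 - etaC T))"

context
  fixes T NB :: nat and eta :: real and v m :: "nat \<Rightarrow> real"
  assumes T1: "T \<ge> 1" and NB1: "NB \<ge> 1"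
    and hv: "\<forall>t\<in>{1..T}. v t \<in> {0..1} \<and> m t \<in> {0..1}"
    and etaC: "0 < etaC T" "etaC T \<le> 1/2"
begin

lemma finite_set_pmf_bidA:
  assumes t: "t \<in> {1..T}"
  shows "finite (set_pmf (bidA T v m t))"
proof -
  obtain s Vp w where st: "prodState T v m (t - 1) = (s, Vp, w)"
    by (cases "prodState T v m (t - 1)")
  have "t \<in> {s..Suc (t - 1)}"
    using prodState_batch(2)[OF st] t by auto
  then have "snd (snd (prodState T v m (t - 1))) = prod_weight (gainA T v m) s t"
    using prodState_batch(3)[OF st] by blast
  then have "w = prod_weight (gainA T v m) s t"
    using st by simp
  moreover have "\<forall>j\<in>{1..T}. 0 < prod_weight (gainA T v m) s t j"
    using prodState_batch(1)[OF st] t prod_weight_gainA_pos[OF hv] by auto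
  ultimately show ?thesis
    using finite_set_pmf_wpmf[OF T1] st by (simp add: bidA_def)
qed

lemma finite_set_pmf_bidB: "finite (set_pmf (bidB NB eta v m t))"
  using finite_set_pmf_wpmf[OF NB1] by (simp add: bidB_def)

lemma reward_bid_bounds:
  assumes t: "t \<in> {1..T}"
    and b: "b \<in> set_pmf (bidA T v m t) \<or> b \<in> set_pmf (bidB NB eta v m t)"
  shows "0 \<le> r b (v t) (m t)" "r b (v t) (m t) \<le> 1"
proof -
  obtain x where "b = min (v t) x"
    using b by (auto simp: bidA_def bidB_def)
  moreover have "v t \<le> 1" "0 \<le> m t"
    using hv t by auto
  ultimately show "0 \<le> r b (v t) (m t)" "r b (v t) (m t) \<le> 1"
    using r_min_bid_nonneg r_min_bid_le_one by auto
qed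

lemma reward_difference_bounds:
  assumes t: "t \<in> {1..T}" and "bA \<in> set_pmf (bidA T v m t)" "bB \<in> set_pmf (bidB NB eta v m t)"
  shows "\<bar>r bA (v t) (m t) - r bB (v t) (m t)\<bar> \<le> 1"
proof -
  have "0 \<le> r bA (v t) (m t)" "r bB (v t) (m t) \<le> 1" "r bA (v t) (m t) \<le> 1" "0 \<le> r bB (v t) (m t)"
    using reward_bid_bounds[OF t] assms(2,3) by auto
  then show ?thesis
    by (simp add: abs_le_iff)
qed

lemma wDist_support:
  "t \<le> T \<Longrightarrow> finite (set_pmf (wDist T NB eta v m t)) \<and> (\<forall>w\<in>set_pmf (wDist T NB eta v m t). 0 < w)"
proof (induction t)
  case 0
  then show ?case
    using etaC by simp
next
  case (Suc t)
  then have t: "Suc t \<in> {1..T}"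
    by simp
  have "0 < w * (1 + etaC T * (r bA (v (Suc t)) (m (Suc t)) - r bB (v (Suc t)) (m (Suc t))))"
    if "0 < w" "bA \<in> set_pmf (bidA T v m (Suc t))" "bB \<in> set_pmf (bidB NB eta v m (Suc t))" for w bA bB
  proof -
    have "-1 \<le> r bA (v (Suc t)) (m (Suc t)) - r bB (v (Suc t)) (m (Suc t))"
      using reward_difference_bounds[OF t that(2,3)] by linarith
    then have "- etaC T \<le> etaC T * (r bA (v (Suc t)) (m (Suc t)) - r bB (v (Suc t)) (m (Suc t)))"
      using etaC mult_left_mono[of "-1" _ "etaC T"] by simp
    with that(1) etaC show ?thesis
      by (intro mult_pos_pos) auto
  qed
  with Suc finite_set_pmf_bidA[OF t] finite_set_pmf_bidB show ?case
    by auto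
qed

lemma expectation_learnerBid:
  assumes t: "t \<in> {1..T}"
  shows "measure_pmf.expectation (learnerBid T NB eta v m t) (\<lambda>b. r b (v t) (m t))
    = rewardB NB eta v m t
      + (rewardA T v m t - rewardB NB eta v m t) * measure_pmf.expectation (wDist T NB eta v m (t - 1)) (probA T)"
proof -
  define W where "W = wDist T NB eta v m (t - 1)"
  define A where "A = bidA T v m t"
  define B where "B = bidB NB eta v m t"
  have W: "finite (set_pmf W)" "\<forall>w\<in>set_pmf W. 0 < w"
    using wDist_support[of "t - 1"] t by (auto simp: W_def)
  have A: "finite (set_pmf A)"
    using finite_set_pmf_bidA[OF t] by (simp add: A_def)
  have B: "finite (set_pmf B)"
    using finite_set_pmf_bidB by (simp add: B_def)
  have p: "0 \<le> probA T w" "probA T w \<le> 1" if "w \<in> set_pmf W" for w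
  proof -
    have "0 < w"
      using that W(2) by blast
    then show "0 \<le> probA T w" "probA T w \<le> 1"
      using etaC by (simp_all add: probA_def)
  qed
  have "measure_pmf.expectation (learnerBid T NB eta v m t) (\<lambda>b. r b (v t) (m t))
      = measure_pmf.expectation W (\<lambda>w. measure_pmf.expectation A (\<lambda>bA. measure_pmf.expectation B
          (\<lambda>bB. 0 + probA T w * r bA (v t) (m t) + (1 - probA T w) * r bB (v t) (m t))))"
    unfolding learnerBid_def probA_def[symmetric] W_def[symmetric] A_def[symmetric] B_def[symmetric]
    using W A B p
    by (simp add: expectation_bind_pmf_finite algebra_simps cong: expectation_cong_pmf)
  also have "\<dots> = measure_pmf.expectation W
      (\<lambda>w. rewardB NB eta v m t + (rewardA T v m t - rewardB NB eta v m t) * probA T w)"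
    unfolding expectation_pair_affine[OF A B]
    by (simp add: rewardA_def rewardB_def A_def B_def algebra_simps)
  also have "\<dots> = rewardB NB eta v m t
      + (rewardA T v m t - rewardB NB eta v m t) * measure_pmf.expectation W (probA T)"
    using expectation_affine_finite_pmf[OF W(1)] by (simp add: add.commute)
  finally show ?thesis
    by (simp add: W_def)
qed

lemma expectation_wDist_Suc:
  fixes \<phi> :: "real \<Rightarrow> real"
  assumes t: "Suc t \<le> T"
  shows "measure_pmf.expectation (wDist T NB eta v m (Suc t)) \<phi>
    = measure_pmf.expectation (wDist T NB eta v m t) (\<lambda>w.
        measure_pmf.expectation (bidA T v m (Suc t)) (\<lambda>bA.
        measure_pmf.expectation (bidB NB eta v m (Suc t)) (\<lambda>bB.
          \<phi> (w * (1 + etaC T * (r bA (v (Suc t)) (m (Suc t)) - r bB (v (Suc t)) (m (Suc t))))))))"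
  using wDist_support[of t] finite_set_pmf_bidA[of "Suc t"]
    finite_set_pmf_bidB t
  unfolding wDist.simps(2) by (simp add: expectation_bind_pmf_finite cong: expectation_cong_pmf)

lemma expectation_bids_le:
  assumes u: "u \<in> {1..T}"
    and h: "\<And>bA bB. bA \<in> set_pmf (bidA T v m u) \<Longrightarrow> bB \<in> set_pmf (bidB NB eta v m u) \<Longrightarrow>
      \<bar>r bA (v u) (m u) - r bB (v u) (m u)\<bar> \<le> 1 \<Longrightarrow>
      h bA bB \<le> c + k * (r bA (v u) (m u) - r bB (v u) (m u))"
  shows "measure_pmf.expectation (bidA T v m u) (\<lambda>bA. measure_pmf.expectation (bidB NB eta v m u) (h bA))
    \<le> c + k * (rewardA T v m u - rewardB NB eta v m u)"
proof -
  have A: "finite (set_pmf (bidA T v m u))" and B: "finite (set_pmf (bidB NB eta v m u))"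
    using finite_set_pmf_bidA[OF u] finite_set_pmf_bidB by auto
  have "measure_pmf.expectation (bidA T v m u) (\<lambda>bA. measure_pmf.expectation (bidB NB eta v m u) (h bA))
    \<le> measure_pmf.expectation (bidA T v m u) (\<lambda>bA. measure_pmf.expectation (bidB NB eta v m u)
          (\<lambda>bB. c + k * r bA (v u) (m u) + - k * r bB (v u) (m u)))"
  proof (rule expectation_pair_mono[OF A B])
    fix bA bB
    assume "bA \<in> set_pmf (bidA T v m u)" "bB \<in> set_pmf (bidB NB eta v m u)"
    then have "h bA bB \<le> c + k * (r bA (v u) (m u) - r bB (v u) (m u))"
      using h reward_difference_bounds[OF u] by blast
    then show "h bA bB \<le> c + k * r bA (v u) (m u) + - k * r bB (v u) (m u)"
      by (simp add: algebra_simps)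
  qed
  also have "\<dots> = c + k * (rewardA T v m u - rewardB NB eta v m u)"
    unfolding expectation_pair_affine[OF A B] by (simp add: rewardA_def rewardB_def algebra_simps)
  finally show ?thesis .
qed

lemma expectation_bids_ge:
  assumes u: "u \<in> {1..T}"
    and h: "\<And>bA bB. bA \<in> set_pmf (bidA T v m u) \<Longrightarrow> bB \<in> set_pmf (bidB NB eta v m u) \<Longrightarrow>
      \<bar>r bA (v u) (m u) - r bB (v u) (m u)\<bar> \<le> 1 \<Longrightarrow>
      c + k * (r bA (v u) (m u) - r bB (v u) (m u)) \<le> h bA bB"
  shows "c + k * (rewardA T v m u - rewardB NB eta v m u)
    \<le> measure_pmf.expectation (bidA T v m u) (\<lambda>bA. measure_pmf.expectation (bidB NB eta v m u) (h bA))"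
proof -
  have A: "finite (set_pmf (bidA T v m u))" and B: "finite (set_pmf (bidB NB eta v m u))"
    using finite_set_pmf_bidA[OF u] finite_set_pmf_bidB by auto
  have "c + k * (rewardA T v m u - rewardB NB eta v m u)
    = measure_pmf.expectation (bidA T v m u) (\<lambda>bA. measure_pmf.expectation (bidB NB eta v m u)
          (\<lambda>bB. c + k * r bA (v u) (m u) + - k * r bB (v u) (m u)))"
    unfolding expectation_pair_affine[OF A B] by (simp add: rewardA_def rewardB_def algebra_simps)
  also have "\<dots> \<le> measure_pmf.expectation (bidA T v m u) (\<lambda>bA. measure_pmf.expectation (bidB NB eta v m u) (h bA))"
  proof (rule expectation_pair_mono[OF A B])
    fix bA bB
    assume "bA \<in> set_pmf (bidA T v m u)" "bB \<in> set_pmf (bidB NB eta v m u)"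
    then have "c + k * (r bA (v u) (m u) - r bB (v u) (m u)) \<le> h bA bB"
      using h reward_difference_bounds[OF u] by blast
    then show "c + k * r bA (v u) (m u) + - k * r bB (v u) (m u) \<le> h bA bB"
      by (simp add: algebra_simps)
  qed
  finally show ?thesis .
qed

lemma potential_step:
  assumes t: "Suc t \<le> T"
  shows "measure_pmf.expectation (wDist T NB eta v m (Suc t)) (\<lambda>w. ln (w + (1 - etaC T)))
    \<le> measure_pmf.expectation (wDist T NB eta v m t) (\<lambda>w. ln (w + (1 - etaC T)))
      + etaC T * (rewardA T v m (Suc t) - rewardB NB eta v m (Suc t))
        * measure_pmf.expectation (wDist T NB eta v m t) (probA T)"
proof -
  define e where "e = etaC T"
  define W where "W = wDist T NB eta v m t"
  define D where "D = rewardA T v m (Suc t) - rewardB NB eta v m (Suc t)"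
  have u: "Suc t \<in> {1..T}"
    using t by simp
  have W: "finite (set_pmf W)" "\<forall>w\<in>set_pmf W. 0 < w"
    using wDist_support[of t] t by (auto simp: W_def)
  have "measure_pmf.expectation (bidA T v m (Suc t)) (\<lambda>bA. measure_pmf.expectation (bidB NB eta v m (Suc t))
      (\<lambda>bB. ln (w * (1 + e * (r bA (v (Suc t)) (m (Suc t)) - r bB (v (Suc t)) (m (Suc t)))) + (1 - e))))
      \<le> ln (w + (1 - e)) + e * probA T w * D"
    if "w \<in> set_pmf W" for w
  proof -
    have "0 < w"
      using W(2) that by blast
    show ?thesis
      unfolding D_def
      by (rule expectation_bids_le[OF u], unfold probA_def e_def, rule ln_potential_step_le)
        (use etaC \<open>0 < w\<close> in auto)
  qed
  then have "measure_pmf.expectation (wDist T NB eta v m (Suc t)) (\<lambda>w. ln (w + (1 - e)))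
      \<le> measure_pmf.expectation W (\<lambda>w. ln (w + (1 - e)) + e * probA T w * D)"
    unfolding expectation_wDist_Suc[OF t] e_def[symmetric] W_def[symmetric]
    by (rule expectation_mono_finite_pmf[OF W(1)])
  also have "\<dots> = measure_pmf.expectation W (\<lambda>w. ln (w + (1 - e))) + e * D * measure_pmf.expectation W (probA T)"
    using W(1) by (simp add: integrable_measure_pmf_finite mult.commute mult.left_commute)
  finally show ?thesis
    by (simp add: e_def D_def W_def)
qed

lemma log_weight_step:
  assumes t: "Suc t \<le> T"
  shows "measure_pmf.expectation (wDist T NB eta v m t) ln
      + etaC T * (rewardA T v m (Suc t) - rewardB NB eta v m (Suc t)) - 2 * (etaC T)\<^sup>2
    \<le> measure_pmf.expectation (wDist T NB eta v m (Suc t)) ln"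
proof -
  define e where "e = etaC T"
  define W where "W = wDist T NB eta v m t"
  define D where "D = rewardA T v m (Suc t) - rewardB NB eta v m (Suc t)"
  have u: "Suc t \<in> {1..T}"
    using t by simp
  have W: "finite (set_pmf W)" "\<forall>w\<in>set_pmf W. 0 < w"
    using wDist_support[of t] t by (auto simp: W_def)
  have "ln w - 2 * e\<^sup>2 + e * D
      \<le> measure_pmf.expectation (bidA T v m (Suc t)) (\<lambda>bA. measure_pmf.expectation (bidB NB eta v m (Suc t))
          (\<lambda>bB. ln (w * (1 + e * (r bA (v (Suc t)) (m (Suc t)) - r bB (v (Suc t)) (m (Suc t)))))))"
    if "w \<in> set_pmf W" for w
  proof -
    have "0 < w"
      using W(2) that by blast
    show ?thesis
      unfolding D_def
      by (rule expectation_bids_ge[OF u], rule order_trans[OF _ ln_weight_step_ge])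
        (use etaC \<open>0 < w\<close> in \<open>auto simp: e_def\<close>)
  qed
  then have "measure_pmf.expectation W (\<lambda>w. ln w - 2 * e\<^sup>2 + e * D)
      \<le> measure_pmf.expectation (wDist T NB eta v m (Suc t)) ln"
    unfolding expectation_wDist_Suc[OF t] e_def[symmetric] W_def[symmetric]
    by (rule expectation_mono_finite_pmf[OF W(1)])
  moreover have "measure_pmf.expectation W (\<lambda>w. ln w - 2 * e\<^sup>2 + e * D)
      = measure_pmf.expectation W ln - 2 * e\<^sup>2 + e * D"
    using expectation_affine_finite_pmf[OF W(1), of 1 ln "e * D - 2 * e\<^sup>2"] by (simp add: algebra_simps)
  ultimately show ?thesis
    by (simp add: e_def D_def W_def algebra_simps)
qed

lemma potential_le:
  "n \<le> T \<Longrightarrow> measure_pmf.expectation (wDist T NB eta v m n) (\<lambda>w. ln (w + (1 - etaC T)))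
    \<le> etaC T * (\<Sum>t=1..n. (rewardA T v m t - rewardB NB eta v m t)
                    * measure_pmf.expectation (wDist T NB eta v m (t - 1)) (probA T))"
proof (induction n)
  case (Suc n)
  then show ?case
    using potential_step[OF Suc.prems] by (simp add: distrib_left)
qed simp

lemma log_weight_ge:
  "n \<le> T \<Longrightarrow> ln (etaC T) + etaC T * (\<Sum>t=1..n. rewardA T v m t - rewardB NB eta v m t)
      - 2 * (etaC T)\<^sup>2 * real n
    \<le> measure_pmf.expectation (wDist T NB eta v m n) ln"
proof (induction n)
  case (Suc n)
  then show ?case
    using log_weight_step[OF Suc.prems] by (simp add: distrib_left algebra_simps)
qed simp

lemma expDR_eq:
  "expDR T NB eta v m = (\<Sum>t=1..T. max (v t - m t) 0 - rewardB NB eta v m t)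
     - (\<Sum>t=1..T. (rewardA T v m t - rewardB NB eta v m t)
                   * measure_pmf.expectation (wDist T NB eta v m (t - 1)) (probA T))"
proof -
  have "(\<Sum>t=1..T. measure_pmf.expectation (learnerBid T NB eta v m t) (\<lambda>b. r b (v t) (m t)))
      = (\<Sum>t=1..T. rewardB NB eta v m t + (rewardA T v m t - rewardB NB eta v m t)
                   * measure_pmf.expectation (wDist T NB eta v m (t - 1)) (probA T))"
  proof (rule sum.cong[OF refl])
    fix t
    assume "t \<in> {1..T}"
    then show "measure_pmf.expectation (learnerBid T NB eta v m t) (\<lambda>b. r b (v t) (m t))
      = rewardB NB eta v m t + (rewardA T v m t - rewardB NB eta v m t)
          * measure_pmf.expectation (wDist T NB eta v m (t - 1)) (probA T)"
      by (rule expectation_learnerBid)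
  qed
  then show ?thesis
    unfolding expDR_def by (simp add: sum.distrib sum_subtractf)
qed

lemma expectation_ln_wDist_le:
  "measure_pmf.expectation (wDist T NB eta v m T) ln
     \<le> measure_pmf.expectation (wDist T NB eta v m T) (\<lambda>w. ln (w + (1 - etaC T)))"
  and expectation_ln_wDist_ge:
  "ln (1 - etaC T) \<le> measure_pmf.expectation (wDist T NB eta v m T) (\<lambda>w. ln (w + (1 - etaC T)))"
proof -
  have W: "finite (set_pmf (wDist T NB eta v m T))" "\<forall>w\<in>set_pmf (wDist T NB eta v m T). 0 < w"
    using wDist_support[OF order.refl] by auto
  have "ln w \<le> ln (w + (1 - etaC T))" "ln (1 - etaC T) \<le> ln (w + (1 - etaC T))"
    if "w \<in> set_pmf (wDist T NB eta v m T)" for w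
    using W(2) that etaC by auto
  then show "measure_pmf.expectation (wDist T NB eta v m T) ln
     \<le> measure_pmf.expectation (wDist T NB eta v m T) (\<lambda>w. ln (w + (1 - etaC T)))"
    and "ln (1 - etaC T) \<le> measure_pmf.expectation (wDist T NB eta v m T) (\<lambda>w. ln (w + (1 - etaC T)))"
    using expectation_mono_finite_pmf[OF W(1), of "\<lambda>_. ln (1 - etaC T)"]
      expectation_mono_finite_pmf[OF W(1), of ln] by auto
qed

lemma expDR_le_omd_regret:
  "expDR T NB eta v m \<le> (\<Sum>t=1..T. max (v t - m t) 0 - rewardB NB eta v m t) + 2"
proof -
  have "- 2 * etaC T \<le> ln (1 - etaC T)"
    using ln_one_plus_half_ge[of "- 2 * etaC T"] etaC by simp
  then have "etaC T * (-2) \<le> etaC T * (\<Sum>t=1..T. (rewardA T v m t - rewardB NB eta v m t)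
                   * measure_pmf.expectation (wDist T NB eta v m (t - 1)) (probA T))"
    using expectation_ln_wDist_ge potential_le[OF order.refl] by simp
  then have "-2 \<le> (\<Sum>t=1..T. (rewardA T v m t - rewardB NB eta v m t)
                   * measure_pmf.expectation (wDist T NB eta v m (t - 1)) (probA T))"
    using etaC(1) by (rule mult_left_le_imp_le)
  then show ?thesis
    unfolding expDR_eq by linarith
qed

lemma expDR_le_prod_regret:
  "expDR T NB eta v m \<le> (\<Sum>t=1..T. regretA T v m t) + 2 * etaC T * real T - ln (etaC T) / etaC T"
proof -
  define e where "e = etaC T"
  define D where "D t = rewardA T v m t - rewardB NB eta v m t" for t
  define P where "P t = measure_pmf.expectation (wDist T NB eta v m (t - 1)) (probA T)" for t
  have "ln e + e * (\<Sum>t=1..T. D t) - 2 * e\<^sup>2 * real T \<le> e * (\<Sum>t=1..T. D t * P t)"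
    using log_weight_ge[OF order.refl] expectation_ln_wDist_le potential_le[OF order.refl]
    by (simp add: e_def D_def P_def)
  then have "(ln e + e * (\<Sum>t=1..T. D t) - 2 * e\<^sup>2 * real T) / e \<le> (\<Sum>t=1..T. D t * P t)"
    using etaC by (simp add: e_def pos_divide_le_eq mult.commute)
  moreover have "(ln e + e * (\<Sum>t=1..T. D t) - 2 * e\<^sup>2 * real T) / e
      = ln e / e + (\<Sum>t=1..T. D t) - 2 * e * real T"
    using etaC by (simp add: e_def field_simps power2_eq_square)
  moreover have "(\<Sum>t=1..T. max (v t - m t) 0 - rewardB NB eta v m t)
      = (\<Sum>t=1..T. regretA T v m t) + (\<Sum>t=1..T. D t)"
    by (simp add: regretA_def D_def flip: sum.distrib)
  ultimately show ?thesis
    unfolding expDR_eq by (simp add: e_def D_def P_def)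
qed

end

lemma one_le_ln_nat: "3 \<le> T \<Longrightarrow> 1 \<le> ln (real T)"
  using exp_le by (subst ln_ge_iff) auto

lemma etaC_bounds:
  assumes T4: "T \<ge> 4"
  shows "0 < etaC T" "etaC T \<le> 1/2" "1 / etaC T \<le> 2 * sqrt (real T)"
    and "2 * etaC T * real T \<le> ln (real T) * sqrt (real T)"
proof -
  define L where "L = ln (real T)"
  have L: "1 \<le> L" "L \<le> real T"
    using one_le_ln_nat[of T] ln_le_minus_one[of "real T"] T4 by (auto simp: L_def)
  have T_pos: "0 < real T"
    using T4 by simp
  have eta: "etaC T = sqrt L / (2 * sqrt (real T))"
    by (simp add: etaC_def L_def real_sqrt_divide)
  show "0 < etaC T"
    using L T_pos by (simp add: eta)
  show "etaC T \<le> 1/2"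
    using L T_pos by (simp add: eta divide_le_eq)
  show "1 / etaC T \<le> 2 * sqrt (real T)"
    using L T_pos by (simp add: eta divide_le_eq mult_left_le)
  have "1 \<le> sqrt L"
    using L by simp
  then have "sqrt L * 1 \<le> sqrt L * sqrt L"
    by (intro mult_left_mono) auto
  then have "sqrt L * sqrt (real T) \<le> L * sqrt (real T)"
    using L by (simp add: mult_right_mono)
  moreover have "2 * etaC T * real T = sqrt L * sqrt (real T)"
    using T_pos by (simp add: eta field_simps)
  ultimately show "2 * etaC T * real T \<le> ln (real T) * sqrt (real T)"
    by (simp add: L_def)
qed

lemma neg_ln_etaC_div_le:
  assumes T4: "T \<ge> 4"
  shows "- ln (etaC T) / etaC T \<le> 2 * ln (real T) * sqrt (real T)"
proof -
  note eta = etaC_bounds(1-3)[OF T4]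
  have T_pos: "0 < real T"
    using T4 by simp
  have "- ln (etaC T) = ln (1 / etaC T)"
    using eta by (simp add: ln_div)
  also have "\<dots> \<le> ln (2 * sqrt (real T))"
    using eta T_pos by (subst ln_le_cancel_iff) auto
  also have "\<dots> = ln 2 + ln (real T) / 2"
    using T_pos by (simp add: ln_mult ln_sqrt)
  also have "ln 2 \<le> ln (real T) / 2"
  proof -
    have "2 * ln 2 = ln (4::real)"
      using ln_realpow[of 2 2] by simp
    also have "\<dots> \<le> ln (real T)"
      using T4 by simp
    finally show ?thesis
      by simp
  qed
  finally have "- ln (etaC T) \<le> ln (real T)"
    by simp
  moreover have "0 \<le> - ln (etaC T)"
    using eta by simp
  ultimately have "- ln (etaC T) * (1 / etaC T) \<le> ln (real T) * (2 * sqrt (real T))"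
    using eta one_le_ln_nat[of T] T4 by (intro mult_mono) auto
  then show ?thesis
    by simp
qed

lemma VT_le_LT:
  assumes hv: "\<forall>t\<in>{1..T}. v t \<in> {0..1} \<and> m t \<in> {0..1}"
  shows "VT m T \<le> LT m T"
proof -
  have "VT m T \<le> (\<Sum>t=2..T. of_bool (m t \<noteq> m (t - 1)))"
    unfolding VT_def
  proof (intro sum_mono)
    fix t
    assume "t \<in> {2..T}"
    then have "t \<in> {1..T}" "t - 1 \<in> {1..T}"
      by auto
    then have "m t \<in> {0..1}" "m (t - 1) \<in> {0..1}"
      using hv by blast+
    then show "\<bar>m t - m (t - 1)\<bar> \<le> of_bool (m t \<noteq> m (t - 1))"
      by auto
  qed
  then show ?thesis
    by (simp add: LT_def sum_of_bool_eq Int_def conj_commute)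
qed

lemma expDR_le_sqrt_variation:
  assumes T4: "T \<ge> 4" and hv: "\<forall>t\<in>{1..T}. v t \<in> {0..1} \<and> m t \<in> {0..1}" and V1: "1 \<le> VT m T"
    and NB1: "NB \<ge> 1"
  shows "expDR T NB eta v m \<le> 40 * ln (real T) * sqrt (real T * VT m T)"
proof -
  define L where "L = ln (real T)"
  define Q where "Q = sqrt (real T * VT m T)"
  have T1: "T \<ge> 1"
    using T4 by simp
  have L1: "1 \<le> L"
    using one_le_ln_nat T4 by (simp add: L_def)
  have Q: "sqrt (real T) \<le> Q" "1 \<le> Q"
    using V1 T4 by (auto simp: Q_def real_sqrt_mult intro: order.trans[of _ "sqrt (real T)"])
  have "1 / real T \<le> 1"
    using T1 by simp
  then have "sqrt (VT m T + 1 / real T) \<le> sqrt (4 * VT m T)"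
    using V1 by simp
  also have "\<dots> = 2 * sqrt (VT m T)"
    by (simp add: real_sqrt_mult)
  finally have "sqrt (real T) * sqrt (VT m T + 1 / real T) \<le> sqrt (real T) * (2 * sqrt (VT m T))"
    by (intro mult_left_mono) auto
  then have "sqrt (real T) * sqrt (VT m T + 1 / real T) \<le> 2 * Q"
    by (simp add: Q_def real_sqrt_mult)
  then have "(2 * L + 10) * sqrt (real T) * sqrt (VT m T + 1 / real T) \<le> (2 * L + 10) * (2 * Q)"
    using L1 by (simp add: mult.assoc mult_left_mono)
  moreover have "L * 1 \<le> L * Q" "L * sqrt (real T) \<le> L * Q"
    using L1 Q by (simp_all add: mult_left_mono)
  moreover have "(2 * L + 10) * (2 * Q) \<le> 24 * (L * Q)"
    using L1 Q by (simp add: algebra_simps mult_right_mono)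
  ultimately show ?thesis
    using expDR_le_prod_regret[where eta = eta, OF T1 NB1 hv etaC_bounds(1,2)[OF T4]]
      prod_regret_total_le[OF T1 hv]
      etaC_bounds(4)[OF T4] neg_ln_etaC_div_le[OF T4] L1
    unfolding L_def[symmetric] Q_def[symmetric] by linarith
qed

text \<open>With \<open>N = T + 1\<close> experts and \<open>\<eta> = (T + 1)\<^sup>3\<close>, a stable round costs AR-OMD at most
  \<open>1/N + N/\<eta> \<le> 2/T\<close>.\<close>
lemma expDR_le_changes:
  assumes T4: "T \<ge> 4" and hv: "\<forall>t\<in>{1..T}. v t \<in> {0..1} \<and> m t \<in> {0..1}" and V1: "1 \<le> VT m T"
  shows "expDR T (T + 1) ((real T + 1) ^ 3) v m \<le> 40 * ln (real T) * LT m T"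
proof -
  have T1: "T \<ge> 1"
    using T4 by simp
  have L: "1 \<le> LT m T" "1 \<le> ln (real T)"
    using V1 VT_le_LT[OF hv] one_le_ln_nat T4 by auto
  have "real T * (1 / real (T + 1) + real (T + 1) / (real T + 1) ^ 3) \<le> 2"
  proof -
    define y where "y = real T + 1"
    have y: "1 \<le> y" "real T \<le> y"
      by (simp_all add: y_def)
    have "1 / y + y / y ^ 3 = 1 / y + 1 / y ^ 2"
      using y by (simp add: power3_eq_cube power2_eq_square)
    also have "1 / y ^ 2 \<le> 1 / y"
      using y by (simp add: divide_le_eq power2_eq_square)
    finally have "real T * (1 / y + y / y ^ 3) \<le> real T * (2 / y)"
      by (intro mult_left_mono) auto
    also have "\<dots> \<le> 2"
      using y by (simp add: divide_le_eq)
    finally show ?thesis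
      by (simp add: y_def add.commute)
  qed
  moreover have "6 * LT m T \<le> 40 * ln (real T) * LT m T"
    using L by (simp add: mult_right_mono)
  moreover have "expDR T (T + 1) ((real T + 1) ^ 3) v m
      \<le> (\<Sum>t=1..T. max (v t - m t) 0 - rewardB (T + 1) ((real T + 1) ^ 3) v m t) + 2"
    by (rule expDR_le_omd_regret[OF T1 _ hv etaC_bounds(1,2)[OF T4]]) simp
  moreover have "(\<Sum>t=1..T. max (v t - m t) 0 - rewardB (T + 1) ((real T + 1) ^ 3) v m t)
      \<le> 1 + LT m T + real T * (1 / real (T + 1) + real (T + 1) / (real T + 1) ^ 3)"
    by (rule omd_regret_total_le[OF _ _ hv]) simp_all
  ultimately show ?thesis
    using L(1) by linarith
qed

theorem theorem3:
  shows "\<exists>NB :: nat \<Rightarrow> nat. \<exists>etaB :: nat \<Rightarrow> real.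
     (\<forall>T. NB T \<ge> 1 \<and> etaB T > 0) \<and>
     (\<forall>c>0. \<exists>(C::real) (k::nat) (T0::nat). \<forall>T\<ge>T0. \<forall>v m.
        (\<forall>t\<in>{1..T}. v t \<in> {0..1} \<and> m t \<in> {0..1}) \<and> VT m T \<ge> c * ln (real T) \<longrightarrow>
        expDR T (NB T) (etaB T) v m
          \<le> C * (ln (real T)) ^ k * min (sqrt (real T * VT m T)) (LT m T))"
proof -
  have "\<exists>(C::real) (k::nat) (T0::nat). \<forall>T\<ge>T0. \<forall>v m.
        (\<forall>t\<in>{1..T}. v t \<in> {0..1} \<and> m t \<in> {0..1}) \<and> VT m T \<ge> c * ln (real T) \<longrightarrow>
        expDR T (T + 1) ((real T + 1) ^ 3) v m
          \<le> C * (ln (real T)) ^ k * min (sqrt (real T * VT m T)) (LT m T)"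
    if c: "c > 0" for c
  proof (rule exI[of _ 40], rule exI[of _ 1], rule exI[of _ "max 4 (nat \<lceil>exp (1 / c)\<rceil>)"],
      intro allI impI)
    fix T :: nat and v m :: "nat \<Rightarrow> real"
    assume T: "max 4 (nat \<lceil>exp (1 / c)\<rceil>) \<le> T"
      and hv: "(\<forall>t\<in>{1..T}. v t \<in> {0..1} \<and> m t \<in> {0..1}) \<and> c * ln (real T) \<le> VT m T"
    have "exp (1 / c) \<le> real T"
      using T by linarith
    then have "1 / c \<le> ln (real T)"
      using T by (subst ln_ge_iff) auto
    then have "1 \<le> VT m T"
      using c hv by (simp add: divide_le_eq mult.commute)
    then show "expDR T (T + 1) ((real T + 1) ^ 3) v m
        \<le> 40 * ln (real T) ^ 1 * min (sqrt (real T * VT m T)) (LT m T)"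
      using expDR_le_sqrt_variation[of T v m "T + 1"] expDR_le_changes[of T v m] T hv
      by (simp add: min_mult_distrib_left)
  qed
  then show ?thesis
    by (intro exI[of _ "\<lambda>T. T + 1"] exI[of _ "\<lambda>T. (real T + 1) ^ 3"]) auto
qed

end
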